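(* Assume $\mathsf{X}=\mathsf{Y}$ is finite. For every $D\ge0$, $$\mathrm{cl}\,\mathcal{R}(D)\supseteq \mathcal{S}(D):=\Big\{(R,R_c)\in\mathbb{R}^2:\ \exists\,P_{X,Y,U}\in\mathcal{H}(D)\text{ with } R\ge I(X;U),\ R+R_c\ge I(X,Y;U)\Big\},$$ where $\mathcal{H}(D):=\{P_{X,Y,U}: P_X=\mu,\ P_Y=\psi,\ \mathbb{E}[\rho(X,Y)]\le D,\ X-U-Y,\ |\mathsf{U}|\le|\mathsf{X}||\mathsf{Y}|+1\}$.
   Context: $\mathsf{X}=\mathsf{Y}$ is a finite set with metric $d$, distortion $\rho(x,y)=d(x,y)^p$ for some $p>0$; $\mu,\psi$ are probability distributions on $\mathsf{X}$. For $R\ge0$ let $[2^{nR}]:=\{1,\dots,\lceil 2^{nR}\rceil\}$. The source $X^n$ is i.i.d. $\mu$; $K$ is uniform on $[2^{nR_c}]$, independent of $X^n$. An $(n,R,R_c)$ randomized source code consists of a stochastic encoder $E_{J|X^n,K}$ with values in $[2^{nR}]$ and a stochastic decoder $F_{Y^n|J,K}$ with values in $\mathsf{Y}^n$; the joint law of $(K,X^n,J,Y^n)$ is $F_{Y^n|J,K}E_{J|X^n,K}P_KP_{X^n}$. $\rho_n(x^n,y^n)=\frac1n\sum_i\rho(x_i,y_i)$. A pair $(R,R_c)$ is achievable at distortion $D$ if for every $\varepsilon>0$ and all large $n$ there is such a code with $\mathbb{E}[\rho_n(X^n,Y^n)]\le D+\varepsilon$ and $Y^n\sim\psi^n$ exactly;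 $\mathcal{R}(D)$ is the set of achievable pairs. *)

theory Defs
  imports "HOL-Probability.Probability"
begin

definition idx_set :: "nat \<Rightarrow> real \<Rightarrow> nat set" where
  "idx_set n R = {1 .. nat \<lceil>2 powr (real n * R)\<rceil>}"

fun iid_pmf :: "nat \<Rightarrow> 'a pmf \<Rightarrow> 'a list pmf" where
  "iid_pmf 0 p = return_pmf []"
| "iid_pmf (Suc n) p = bind_pmf p (\<lambda>x. map_pmf (\<lambda>xs. x # xs) (iid_pmf n p))"

definition rho_n :: "('a \<Rightarrow> 'a \<Rightarrow> real) \<Rightarrow> nat \<Rightarrow> 'a list \<Rightarrow> 'a list \<Rightarrow> real" where
  "rho_n \<rho> n xs ys = (1 / real n) * sum_list (map2 \<rho> xs ys)"

text \<open>Joint law of (K, X^n, J, Y^n) for a randomized code with encoder E (key, source seq)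
  and decoder F (message, key).\<close>
definition code_law :: "nat \<Rightarrow> real \<Rightarrow> 'a pmf \<Rightarrow> (nat \<Rightarrow> 'a list \<Rightarrow> nat pmf)
    \<Rightarrow> (nat \<Rightarrow> nat \<Rightarrow> 'a list pmf) \<Rightarrow> (nat \<times> 'a list \<times> nat \<times> 'a list) pmf" where
  "code_law n Rc \<mu> E F =
     bind_pmf (pmf_of_set (idx_set n Rc)) (\<lambda>k.
     bind_pmf (iid_pmf n \<mu>) (\<lambda>x.
     bind_pmf (E k x) (\<lambda>j.
     bind_pmf (F j k) (\<lambda>y. return_pmf (k, x, j, y)))))"

definition is_code :: "nat \<Rightarrow> real \<Rightarrow> real \<Rightarrow> (nat \<Rightarrow> 'a list \<Rightarrow> nat pmf)
    \<Rightarrow> (nat \<Rightarrow> nat \<Rightarrow> 'a list pmf) \<Rightarrow> bool" where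
  "is_code n R Rc E F \<longleftrightarrow>
     (\<forall>k \<in> idx_set n Rc. \<forall>x. length x = n \<longrightarrow> set_pmf (E k x) \<subseteq> idx_set n R) \<and>
     (\<forall>j k. set_pmf (F j k) \<subseteq> {ys. length ys = n})"

definition achievable :: "('a \<Rightarrow> 'a \<Rightarrow> real) \<Rightarrow> 'a pmf \<Rightarrow> 'a pmf \<Rightarrow> real \<Rightarrow> real \<Rightarrow> real \<Rightarrow> bool" where
  "achievable \<rho> \<mu> \<psi> D R Rc \<longleftrightarrow>
     (\<forall>\<epsilon>>0. \<exists>N. \<forall>n\<ge>N. \<exists>E F. is_code n R Rc E F \<and>
        measure_pmf.expectation (code_law n Rc \<mu> E F) (\<lambda>(k, x, j, y). rho_n \<rho> n x y) \<le> D + \<epsilon> \<and>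
        map_pmf (\<lambda>(k, x, j, y). y) (code_law n Rc \<mu> E F) = iid_pmf n \<psi>)"

definition rate_region :: "('a \<Rightarrow> 'a \<Rightarrow> real) \<Rightarrow> 'a pmf \<Rightarrow> 'a pmf \<Rightarrow> real \<Rightarrow> (real \<times> real) set" where
  "rate_region \<rho> \<mu> \<psi> D = {(R, Rc). achievable \<rho> \<mu> \<psi> D R Rc}"

definition mi :: "'c pmf \<Rightarrow> ('c \<Rightarrow> 'd) \<Rightarrow> ('c \<Rightarrow> 'e) \<Rightarrow> real" where
  "mi P A B = prob_space.mutual_information (measure_pmf P) 2
      (count_space UNIV) (count_space UNIV) A B"

definition markov_XUY :: "('a \<times> 'b \<times> 'u) pmf \<Rightarrow> bool" where
  "markov_XUY P \<longleftrightarrow> (\<forall>x y u.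
     pmf P (x, y, u) * pmf (map_pmf (\<lambda>(x, y, u). u) P) u =
     pmf (map_pmf (\<lambda>(x, y, u). (x, u)) P) (x, u) * pmf (map_pmf (\<lambda>(x, y, u). (y, u)) P) (y, u))"

text \<open>H(D): auxiliary alphabet U identified with {0,...,|X||Y|} (size |X||Y|+1).\<close>
definition H_set :: "('a::finite \<Rightarrow> 'a \<Rightarrow> real) \<Rightarrow> 'a pmf \<Rightarrow> 'a pmf \<Rightarrow> real \<Rightarrow> ('a \<times> 'a \<times> nat) pmf set" where
  "H_set \<rho> \<mu> \<psi> D = {P.
     map_pmf (\<lambda>(x, y, u). x) P = \<mu> \<and>
     map_pmf (\<lambda>(x, y, u). y) P = \<psi> \<and>
     measure_pmf.expectation P (\<lambda>(x, y, u). \<rho> x y) \<le> D \<and>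
     markov_XUY P \<and>
     (\<forall>(x, y, u) \<in> set_pmf P. u < CARD('a) * CARD('a) + 1)}"

definition S_set :: "('a::finite \<Rightarrow> 'a \<Rightarrow> real) \<Rightarrow> 'a pmf \<Rightarrow> 'a pmf \<Rightarrow> real \<Rightarrow> (real \<times> real) set" where
  "S_set \<rho> \<mu> \<psi> D = {(R, Rc). \<exists>P \<in> H_set \<rho> \<mu> \<psi> D.
     R \<ge> mi P (\<lambda>(x, y, u). x) (\<lambda>(x, y, u). u) \<and>
     R + Rc \<ge> mi P (\<lambda>(x, y, u). (x, y)) (\<lambda>(x, y, u). u)}"

end

theory Submission
  imports Defs "HOL-Real_Asymp.Real_Asymp"
begin

text \<open>Random coding with a likelihood encoder.  Draw \<open>2\<^bsup>n(R+Rc)\<^esup>\<close> i.i.d.\ codewords from \<open>P\<^sub>U\<^sup>n\<close>, arranged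
  in \<open>2\<^bsup>nRc\<^esup>\<close> rows indexed by the common randomness; the encoder picks a codeword of the selected row
  with probability proportional to the likelihood of the source under \<open>P\<^sub>X\<^sub>|\<^sub>U\<close>, and the decoder passes
  it through \<open>P\<^sub>Y\<^sub>|\<^sub>U\<close>.  Were the source the ideal mixture of the row's codewords through \<open>P\<^sub>X\<^sub>|\<^sub>U\<close>,
  the pair \<open>(X\<^sup>n, Y\<^sup>n)\<close> would be a uniformly chosen codeword pushed through \<open>P\<^sub>X\<^sub>Y\<^sub>|\<^sub>U\<close>, with expected
  distortion \<open>E \<rho>(X, Y)\<close>.  Soft covering makes the true source \<open>L\<^sub>1\<close>-close to the ideal one when
  \<open>R > I(X;U)\<close>, and the output \<open>L\<^sub>1\<close>-close to \<open>\<psi>\<^sup>n\<close> when \<open>R + Rc > I(X,Y;U)\<close>.  A final correction channel,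
  which moves only the mismatched mass, makes the output exactly \<open>\<psi>\<^sup>n\<close> at a distortion cost of order
  that \<open>L\<^sub>1\<close> distance.  Some codebook does as well as the average, and taking the closure absorbs the
  strict rate inequalities.\<close>

section \<open>Finite expectations\<close>

abbreviation finite_pmf :: "'a pmf \<Rightarrow> bool" where
  "finite_pmf p \<equiv> finite (set_pmf p)"

definition expect :: "'a pmf \<Rightarrow> ('a \<Rightarrow> real) \<Rightarrow> real" where
  "expect p f = (\<Sum>x\<in>set_pmf p. pmf p x * f x)"

lemma finite_pmf_finite_type: "finite_pmf (p :: 'b::finite pmf)"
  by (rule finite_subset[OF subset_UNIV]) simp

lemma expect_eq_integral: "finite_pmf p \<Longrightarrow> measure_pmf.expectation p f = expect p f"
  unfolding expect_def by (subst integral_measure_pmf_real[of "set_pmf p"]) (auto simp: mult.commute)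

lemma expect_superset: "finite A \<Longrightarrow> set_pmf p \<subseteq> A \<Longrightarrow> expect p f = (\<Sum>x\<in>A. pmf p x * f x)"
  unfolding expect_def by (rule sum.mono_neutral_left) (auto simp: set_pmf_iff)

lemma expect_cong: "(\<And>x. x \<in> set_pmf p \<Longrightarrow> f x = g x) \<Longrightarrow> expect p f = expect p g"
  unfolding expect_def by (rule sum.cong) auto

lemma expect_const [simp]: "finite_pmf p \<Longrightarrow> expect p (\<lambda>x. c) = c"
  by (simp add: expect_eq_integral[symmetric])

lemma expect_return_pmf [simp]: "expect (return_pmf a) f = f a"
  unfolding expect_def by simp

lemma expect_add: "expect p (\<lambda>x. f x + g x) = expect p f + expect p g"
  unfolding expect_def by (simp add: distrib_left sum.distrib)

lemma expect_diff: "expect p (\<lambda>x. f x - g x) = expect p f - expect p g"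
  unfolding expect_def by (simp add: right_diff_distrib sum_subtractf)

lemma expect_cmult: "expect p (\<lambda>x. c * f x) = c * expect p f"
  unfolding expect_def by (simp add: sum_distrib_left mult.left_commute)

lemma expect_multc: "expect p (\<lambda>x. f x * c) = expect p f * c"
  unfolding expect_def by (simp add: sum_distrib_right mult.assoc)

lemma expect_divc: "expect p (\<lambda>x. f x / c) = expect p f / c"
  unfolding expect_def by (simp add: sum_divide_distrib)

lemma expect_sum: "expect p (\<lambda>x. \<Sum>i\<in>I. f i x) = (\<Sum>i\<in>I. expect p (f i))"
  unfolding expect_def by (simp add: sum_distrib_left sum.swap[of _ I])

lemma expect_mono: "(\<And>x. x \<in> set_pmf p \<Longrightarrow> f x \<le> g x) \<Longrightarrow> expect p f \<le> expect p g"
  unfolding expect_def by (rule sum_mono) (simp add: mult_left_mono)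

lemma expect_nonneg: "(\<And>x. x \<in> set_pmf p \<Longrightarrow> 0 \<le> f x) \<Longrightarrow> 0 \<le> expect p f"
  unfolding expect_def by (rule sum_nonneg) simp

lemma expect_abs_le: "\<bar>expect p f\<bar> \<le> expect p (\<lambda>x. \<bar>f x\<bar>)"
  unfolding expect_def by (rule order_trans[OF sum_abs]) (simp add: abs_mult)

lemma expect_le_const: "finite_pmf p \<Longrightarrow> (\<And>x. x \<in> set_pmf p \<Longrightarrow> f x \<le> c) \<Longrightarrow> expect p f \<le> c"
  using expect_mono[of p f "\<lambda>_. c"] by simp

lemma expect_ge_const: "finite_pmf p \<Longrightarrow> (\<And>x. x \<in> set_pmf p \<Longrightarrow> c \<le> f x) \<Longrightarrow> c \<le> expect p f"
  using expect_mono[of p "\<lambda>_. c" f] by simp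

lemma expect_map: "finite_pmf p \<Longrightarrow> expect (map_pmf g p) f = expect p (\<lambda>x. f (g x))"
  by (simp add: expect_eq_integral[symmetric])

lemma pmf_bind_expect: "finite_pmf p \<Longrightarrow> pmf (bind_pmf p N) y = expect p (\<lambda>x. pmf (N x) y)"
  by (simp add: pmf_bind expect_eq_integral)

lemma finite_pmf_bind: "finite_pmf p \<Longrightarrow> (\<And>x. x \<in> set_pmf p \<Longrightarrow> finite_pmf (f x)) \<Longrightarrow> finite_pmf (bind_pmf p f)"
  by simp

lemma expect_bind:
  assumes "finite_pmf p" "\<And>x. x \<in> set_pmf p \<Longrightarrow> finite_pmf (N x)"
  shows "expect (bind_pmf p N) f = expect p (\<lambda>x. expect (N x) f)"
proof -
  let ?S = "set_pmf (bind_pmf p N)"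
  have fS: "finite ?S" using assms by simp
  have "expect (bind_pmf p N) f = (\<Sum>y\<in>?S. (\<Sum>x\<in>set_pmf p. pmf p x * pmf (N x) y) * f y)"
    unfolding expect_def pmf_bind_expect[OF assms(1)] expect_def ..
  also have "\<dots> = (\<Sum>x\<in>set_pmf p. pmf p x * (\<Sum>y\<in>?S. pmf (N x) y * f y))"
    by (simp add: sum_distrib_right sum_distrib_left sum.swap[of _ "set_pmf p"] mult.assoc)
  also have "\<dots> = expect p (\<lambda>x. expect (N x) f)"
    unfolding expect_def
    by (rule sum.cong[OF refl], subst expect_superset[OF fS, symmetric, unfolded expect_def]) auto
  finally show ?thesis .
qed

lemma expect_pmf_of_set:
  "finite A \<Longrightarrow> A \<noteq> {} \<Longrightarrow> expect (pmf_of_set A) f = (\<Sum>a\<in>A. f a) / card A"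
  unfolding expect_def by (simp add: sum_divide_distrib)

lemma expect_indicator_point: "finite_pmf p \<Longrightarrow> expect p (\<lambda>x. if x = y then c else 0) = pmf p y * c"
  unfolding expect_def
  by (cases "y \<in> set_pmf p") (auto simp: set_pmf_iff if_distrib sum.If_cases cong: if_cong)

lemma expect_bernoulli:
  "0 \<le> t \<Longrightarrow> t \<le> 1 \<Longrightarrow> expect (bernoulli_pmf t) h = t * h True + (1 - t) * h False"
  by (subst expect_superset[of UNIV]) (auto simp: UNIV_bool)

lemma sum_pmf_superset: "finite A \<Longrightarrow> set_pmf p \<subseteq> A \<Longrightarrow> (\<Sum>x\<in>A. pmf p x) = 1"
  using expect_superset[of A p "\<lambda>_. 1"] finite_subset[of "set_pmf p" A] by simp

lemma expect_square_le: "finite_pmf p \<Longrightarrow> (expect p f)\<^sup>2 \<le> expect p (\<lambda>x. (f x)\<^sup>2)"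
proof -
  assume fp: "finite_pmf p"
  let ?c = "expect p f"
  have "expect p (\<lambda>x. (f x - ?c)\<^sup>2) = expect p (\<lambda>x. ((f x)\<^sup>2 - (2 * ?c) * f x) + ?c\<^sup>2)"
    by (rule expect_cong) (simp add: power2_eq_square algebra_simps)
  also have "\<dots> = expect p (\<lambda>x. (f x)\<^sup>2) - ?c\<^sup>2"
    using fp by (simp add: expect_add expect_diff expect_cmult power2_eq_square)
  finally show ?thesis using expect_nonneg[of p "\<lambda>x. (f x - ?c)\<^sup>2"] by simp
qed

lemma expect_abs_le_sqrt: "finite_pmf p \<Longrightarrow> expect p (\<lambda>x. \<bar>f x\<bar>) \<le> sqrt (expect p (\<lambda>x. (f x)\<^sup>2))"
  using expect_square_le[of p "\<lambda>x. \<bar>f x\<bar>"] by (simp add: real_le_rsqrt)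

lemma exists_le_expect: "finite_pmf p \<Longrightarrow> \<exists>x\<in>set_pmf p. f x \<le> expect p f"
proof (rule ccontr)
  assume fp: "finite_pmf p" and "\<not> (\<exists>x\<in>set_pmf p. f x \<le> expect p f)"
  then have lt: "\<And>x. x \<in> set_pmf p \<Longrightarrow> expect p f < f x" by auto
  have "Min (f ` set_pmf p) \<in> f ` set_pmf p" using fp set_pmf_not_empty[of p] by (intro Min_in) auto
  then obtain x0 where x0: "x0 \<in> set_pmf p" "Min (f ` set_pmf p) = f x0" by auto
  have "f x0 \<le> expect p f" using fp by (intro expect_ge_const) (auto simp: x0(2)[symmetric] fp)
  then show False using lt[OF x0(1)] by simp
qed


section \<open>I.i.d.\ sequences and memoryless channels\<close>

lemma set_iid_pmf: "set_pmf (iid_pmf n p) = {xs. length xs = n \<and> set xs \<subseteq> set_pmf p}"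
proof (induction n)
  case 0 then show ?case by auto
next
  case (Suc n)
  show ?case
  proof (rule set_eqI)
    fix xs show "xs \<in> set_pmf (iid_pmf (Suc n) p) \<longleftrightarrow> xs \<in> {xs. length xs = Suc n \<and> set xs \<subseteq> set_pmf p}"
      using Suc by (cases xs) auto
  qed
qed

lemma finite_pmf_iid [simp]: "finite_pmf p \<Longrightarrow> finite_pmf (iid_pmf n p)"
  unfolding set_iid_pmf using finite_lists_length_eq[of "set_pmf p" n] by (simp add: conj_commute)

lemma finite_pmf_iid_finite_type: "finite_pmf (iid_pmf n (p :: 'b::finite pmf))"
  by (rule finite_pmf_iid) (rule finite_pmf_finite_type)

lemma pmf_map_Cons: "pmf (map_pmf (\<lambda>xs. x # xs) q) (y # ys) = (if x = y then pmf q ys else 0)"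
proof -
  have "(\<lambda>xs. x # xs) -` {y # ys} = (if x = y then {ys} else {})" by auto
  then show ?thesis by (simp add: pmf_map measure_pmf_single)
qed

lemma pmf_map_Cons_Nil: "pmf (map_pmf (\<lambda>xs. x # xs) q) [] = 0"
  by (simp add: pmf_map vimage_def)

lemma pmf_iid_pmf:
  "finite_pmf p \<Longrightarrow> pmf (iid_pmf n p) xs = (if length xs = n then prod_list (map (pmf p) xs) else 0)"
proof (induction n arbitrary: xs)
  case 0 then show ?case by (cases xs) auto
next
  case (Suc n)
  show ?case
  proof (cases xs)
    case Nil then show ?thesis using Suc.prems by (simp add: pmf_bind_expect pmf_map_Cons_Nil expect_def)
  next
    case (Cons y ys)
    have "pmf (iid_pmf (Suc n) p) xs = expect p (\<lambda>x. if x = y then pmf (iid_pmf n p) ys else 0)"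
      using Suc.prems Cons by (simp add: pmf_bind_expect pmf_map_Cons)
    also have "\<dots> = pmf p y * pmf (iid_pmf n p) ys" using Suc.prems by (rule expect_indicator_point)
    finally show ?thesis using Suc Cons by simp
  qed
qed

lemma expect_iid_Suc:
  "finite_pmf p \<Longrightarrow> expect (iid_pmf (Suc n) p) f = expect p (\<lambda>x. expect (iid_pmf n p) (\<lambda>xs. f (x # xs)))"
  by (simp only: iid_pmf.simps, subst expect_bind) (auto simp: expect_map)

lemma expect_iid_sum_list:
  "finite_pmf p \<Longrightarrow> expect (iid_pmf n p) (\<lambda>xs. sum_list (map g xs)) = real n * expect p g"
proof (induction n)
  case 0 then show ?case by simp
next
  case (Suc n)
  have "expect (iid_pmf (Suc n) p) (\<lambda>xs. sum_list (map g xs)) =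
        expect p (\<lambda>x. g x + expect (iid_pmf n p) (\<lambda>xs. sum_list (map g xs)))"
    using Suc.prems by (simp add: expect_iid_Suc expect_add del: iid_pmf.simps)
  also have "\<dots> = expect p g + real n * expect p g" using Suc by (simp add: expect_add)
  finally show ?case by (simp add: algebra_simps)
qed

lemma expect_iid_sum_list_square:
  assumes "finite_pmf p" "expect p g = 0"
  shows "expect (iid_pmf n p) (\<lambda>xs. (sum_list (map g xs))\<^sup>2) = real n * expect p (\<lambda>x. (g x)\<^sup>2)"
proof (induction n)
  case 0 then show ?case by simp
next
  case (Suc n)
  let ?S = "\<lambda>xs. sum_list (map g xs)"
  have "expect (iid_pmf (Suc n) p) (\<lambda>xs. (?S xs)\<^sup>2) =
        expect p (\<lambda>x. expect (iid_pmf n p) (\<lambda>xs. (g x)\<^sup>2 + (2 * g x) * ?S xs + (?S xs)\<^sup>2))"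
    using assms by (simp add: expect_iid_Suc power2_eq_square algebra_simps del: iid_pmf.simps)
  also have "\<dots> = expect p (\<lambda>x. (g x)\<^sup>2 + (2 * g x) * (real n * expect p g) + real n * expect p (\<lambda>x. (g x)\<^sup>2))"
    using assms Suc by (simp add: expect_add expect_cmult expect_iid_sum_list)
  also have "\<dots> = expect p (\<lambda>x. (g x)\<^sup>2) + real n * expect p (\<lambda>x. (g x)\<^sup>2)"
    using assms by (simp add: expect_add)
  finally show ?case by (simp add: algebra_simps)
qed

lemma map_pmf_map_iid_pmf: "map_pmf (map f) (iid_pmf n p) = iid_pmf n (map_pmf f p)"
proof (induction n)
  case 0 then show ?case by simp
next
  case (Suc n)
  have "map_pmf (map f) (iid_pmf (Suc n) p) =
      bind_pmf p (\<lambda>x. map_pmf (\<lambda>xs. f x # xs) (map_pmf (map f) (iid_pmf n p)))"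
    by (simp add: map_bind_pmf pmf.map_comp o_def)
  also have "\<dots> = iid_pmf (Suc n) (map_pmf f p)" by (simp add: Suc bind_map_pmf)
  finally show ?case .
qed

lemma iid_pmf_add:
  "iid_pmf (a + b) p = bind_pmf (iid_pmf a p) (\<lambda>xs. map_pmf (\<lambda>ys. xs @ ys) (iid_pmf b p))"
proof (induction a)
  case 0
  have "(@) [] = (id :: 'a list \<Rightarrow> 'a list)" by (rule ext) simp
  then show ?case by (simp add: bind_return_pmf pmf.map_id)
next
  case (Suc a)
  show ?case
    by (simp add: Suc bind_assoc_pmf bind_map_pmf map_bind_pmf pmf.map_comp o_def)
       (intro bind_pmf_cong refl map_pmf_cong, simp)
qed

lemma map_pmf_concat_iid_pmf: "map_pmf concat (iid_pmf m (iid_pmf k p)) = iid_pmf (m * k) p"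
proof (induction m)
  case 0 then show ?case by simp
next
  case (Suc m)
  have "map_pmf concat (iid_pmf (Suc m) (iid_pmf k p)) =
     bind_pmf (iid_pmf k p) (\<lambda>xs. map_pmf (\<lambda>ys. xs @ ys) (map_pmf concat (iid_pmf m (iid_pmf k p))))"
    by (simp add: map_bind_pmf pmf.map_comp o_def)
  also have "\<dots> = iid_pmf (k + m * k) p" by (simp add: Suc iid_pmf_add)
  finally show ?case by (simp add: add.commute)
qed

fun dmc :: "('u \<Rightarrow> 'v pmf) \<Rightarrow> 'u list \<Rightarrow> 'v list pmf" where
  "dmc K [] = return_pmf []"
| "dmc K (u # us) = bind_pmf (K u) (\<lambda>v. map_pmf (\<lambda>vs. v # vs) (dmc K us))"

lemma set_dmc: "set_pmf (dmc K us) = {vs. list_all2 (\<lambda>u v. v \<in> set_pmf (K u)) us vs}"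
proof (induction us)
  case Nil then show ?case by auto
next
  case (Cons u us)
  show ?case
  proof (rule set_eqI)
    fix vs
    show "vs \<in> set_pmf (dmc K (u # us)) \<longleftrightarrow> vs \<in> {vs. list_all2 (\<lambda>u v. v \<in> set_pmf (K u)) (u # us) vs}"
      using Cons by (cases vs) auto
  qed
qed

lemma length_dmc: "vs \<in> set_pmf (dmc K us) \<Longrightarrow> length vs = length us"
  by (auto simp: set_dmc list_all2_lengthD)

lemma finite_pmf_dmc: "(\<And>u. u \<in> set us \<Longrightarrow> finite_pmf (K u)) \<Longrightarrow> finite_pmf (dmc K us)"
  by (induction us) auto

lemma finite_pmf_dmc_finite_type: "finite_pmf (dmc (K :: 'u \<Rightarrow> 'v::finite pmf) us)"
  by (rule finite_pmf_dmc) (rule finite_pmf_finite_type)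

lemma pmf_dmc:
  "(\<And>u. u \<in> set us \<Longrightarrow> finite_pmf (K u)) \<Longrightarrow>
   pmf (dmc K us) vs = (if length vs = length us then prod_list (map2 (\<lambda>u v. pmf (K u) v) us vs) else 0)"
proof (induction us arbitrary: vs)
  case Nil then show ?case by (cases vs) auto
next
  case (Cons u us)
  show ?case
  proof (cases vs)
    case Nil then show ?thesis using Cons.prems by (simp add: pmf_bind_expect pmf_map_Cons_Nil expect_def)
  next
    case (Cons y ys)
    have "pmf (dmc K (u # us)) vs = expect (K u) (\<lambda>x. if x = y then pmf (dmc K us) ys else 0)"
      using Cons.prems Cons by (simp add: pmf_bind_expect pmf_map_Cons)
    also have "\<dots> = pmf (K u) y * pmf (dmc K us) ys" using Cons.prems by (intro expect_indicator_point) auto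
    finally show ?thesis using Cons.IH Cons.prems Cons by simp
  qed
qed

lemma map_pmf_map_dmc: "map_pmf (map f) (dmc K us) = dmc (\<lambda>u. map_pmf f (K u)) us"
proof (induction us)
  case Nil then show ?case by simp
next
  case (Cons u us)
  have "map_pmf (map f) (dmc K (u # us)) =
      bind_pmf (K u) (\<lambda>x. map_pmf (\<lambda>xs. f x # xs) (map_pmf (map f) (dmc K us)))"
    by (simp add: map_bind_pmf pmf.map_comp o_def)
  also have "\<dots> = dmc (\<lambda>u. map_pmf f (K u)) (u # us)" by (simp add: Cons bind_map_pmf)
  finally show ?case .
qed

lemma bind_iid_pmf_dmc_pairs:
  "bind_pmf (iid_pmf n q) (\<lambda>us. map_pmf (\<lambda>vs. (us, vs)) (dmc K us)) =
   map_pmf (\<lambda>ps. (map fst ps, map snd ps)) (iid_pmf n (bind_pmf q (\<lambda>u. map_pmf (Pair u) (K u))))"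
proof (induction n)
  case 0 then show ?case by (simp add: bind_return_pmf)
next
  case (Suc n)
  have "bind_pmf (iid_pmf (Suc n) q) (\<lambda>us. map_pmf (\<lambda>vs. (us, vs)) (dmc K us)) =
     bind_pmf q (\<lambda>u. bind_pmf (K u) (\<lambda>v. map_pmf (\<lambda>(us, vs). (u # us, v # vs))
        (bind_pmf (iid_pmf n q) (\<lambda>us. map_pmf (\<lambda>vs. (us, vs)) (dmc K us)))))"
    by (simp add: bind_assoc_pmf bind_map_pmf map_bind_pmf pmf.map_comp o_def)
       (rule bind_pmf_cong[OF refl], subst bind_commute_pmf,
        simp add: map_pmf_def bind_assoc_pmf bind_return_pmf)
  also have "\<dots> = map_pmf (\<lambda>ps. (map fst ps, map snd ps))
      (iid_pmf (Suc n) (bind_pmf q (\<lambda>u. map_pmf (Pair u) (K u))))"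
    by (simp add: Suc bind_assoc_pmf bind_map_pmf map_bind_pmf pmf.map_comp o_def)
  finally show ?case .
qed

lemma bind_iid_pmf_dmc: "bind_pmf (iid_pmf n q) (dmc K) = iid_pmf n (bind_pmf q K)"
proof -
  have "bind_pmf (iid_pmf n q) (dmc K) =
      map_pmf snd (bind_pmf (iid_pmf n q) (\<lambda>us. map_pmf (\<lambda>vs. (us, vs)) (dmc K us)))"
    by (simp add: map_bind_pmf pmf.map_comp o_def)
  also have "\<dots> = map_pmf (map snd) (iid_pmf n (bind_pmf q (\<lambda>u. map_pmf (Pair u) (K u))))"
    by (simp add: bind_iid_pmf_dmc_pairs pmf.map_comp o_def)
  also have "\<dots> = iid_pmf n (bind_pmf q K)"
    by (simp add: map_pmf_map_iid_pmf map_bind_pmf pmf.map_comp o_def)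
  finally show ?thesis .
qed

lemma dmc_pair_pmf:
  "map_pmf (\<lambda>ps. (map fst ps, map snd ps)) (dmc (\<lambda>u. pair_pmf (A u) (B u)) c) =
   pair_pmf (dmc A c) (dmc B c)"
proof (induction c)
  case Nil then show ?case by simp
next
  case (Cons u c)
  have "map_pmf (\<lambda>ps. (map fst ps, map snd ps)) (dmc (\<lambda>u. pair_pmf (A u) (B u)) (u # c)) =
     bind_pmf (pair_pmf (A u) (B u)) (\<lambda>v. map_pmf (\<lambda>(xs, ys). (fst v # xs, snd v # ys))
        (map_pmf (\<lambda>ps. (map fst ps, map snd ps)) (dmc (\<lambda>u. pair_pmf (A u) (B u)) c)))"
    by (simp add: map_bind_pmf pmf.map_comp o_def split_beta)
  also have "\<dots> = pair_pmf (dmc A (u # c)) (dmc B (u # c))"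
    unfolding Cons
    by (simp add: pair_pmf_def bind_assoc_pmf bind_map_pmf map_bind_pmf bind_return_pmf map_pmf_def)
       (rule bind_pmf_cong[OF refl], subst bind_commute_pmf, rule bind_pmf_cong[OF refl], rule refl)
  finally show ?case .
qed


section \<open>The \<open>L\<^sub>1\<close> distance between distributions\<close>

definition l1_dist :: "'a pmf \<Rightarrow> 'a pmf \<Rightarrow> real" where
  "l1_dist a b = (\<Sum>x\<in>set_pmf a \<union> set_pmf b. \<bar>pmf a x - pmf b x\<bar>)"

lemma l1_dist_superset:
  "finite A \<Longrightarrow> set_pmf a \<subseteq> A \<Longrightarrow> set_pmf b \<subseteq> A \<Longrightarrow> l1_dist a b = (\<Sum>x\<in>A. \<bar>pmf a x - pmf b x\<bar>)"
  unfolding l1_dist_def by (rule sum.mono_neutral_left) (auto simp: set_pmf_iff)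

lemma l1_dist_commute: "l1_dist a b = l1_dist b a"
  unfolding l1_dist_def by (simp add: Un_commute abs_minus_commute)

lemma l1_dist_triangle:
  assumes "finite_pmf a" "finite_pmf b" "finite_pmf c"
  shows "l1_dist a c \<le> l1_dist a b + l1_dist b c"
proof -
  let ?A = "set_pmf a \<union> set_pmf b \<union> set_pmf c"
  have f: "finite ?A" using assms by simp
  have "l1_dist a c = (\<Sum>x\<in>?A. \<bar>pmf a x - pmf c x\<bar>)" by (rule l1_dist_superset[OF f]) auto
  also have "\<dots> \<le> (\<Sum>x\<in>?A. \<bar>pmf a x - pmf b x\<bar> + \<bar>pmf b x - pmf c x\<bar>)"
    by (rule sum_mono) (rule order_trans[OF _ abs_triangle_ineq], simp)
  also have "\<dots> = l1_dist a b + l1_dist b c"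
    by (simp add: sum.distrib, subst (1 2) l1_dist_superset[OF f]) auto
  finally show ?thesis .
qed

lemma expect_diff_le_l1_dist:
  assumes "finite_pmf a" "finite_pmf b" "\<And>x. x \<in> set_pmf a \<union> set_pmf b \<Longrightarrow> \<bar>f x\<bar> \<le> B"
  shows "expect a f - expect b f \<le> B * l1_dist a b"
proof -
  let ?A = "set_pmf a \<union> set_pmf b"
  have f: "finite ?A" using assms by simp
  have "expect a f - expect b f = (\<Sum>x\<in>?A. (pmf a x - pmf b x) * f x)"
    by (simp add: expect_superset[OF f] left_diff_distrib sum_subtractf)
  also have "\<dots> \<le> (\<Sum>x\<in>?A. \<bar>pmf a x - pmf b x\<bar> * B)"
  proof (rule sum_mono)
    fix x assume x: "x \<in> ?A"
    have "(pmf a x - pmf b x) * f x \<le> \<bar>pmf a x - pmf b x\<bar> * \<bar>f x\<bar>" by (simp add: abs_mult[symmetric])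
    also have "\<dots> \<le> \<bar>pmf a x - pmf b x\<bar> * B" using assms(3)[OF x] by (intro mult_left_mono) auto
    finally show "(pmf a x - pmf b x) * f x \<le> \<bar>pmf a x - pmf b x\<bar> * B" .
  qed
  also have "\<dots> = B * l1_dist a b" by (simp add: l1_dist_def sum_distrib_left mult.commute)
  finally show ?thesis .
qed

lemma l1_dist_eq_expect_sgn:
  assumes "finite_pmf a" "finite_pmf b"
  shows "l1_dist a b = expect a (\<lambda>x. sgn (pmf a x - pmf b x)) - expect b (\<lambda>x. sgn (pmf a x - pmf b x))"
proof -
  let ?A = "set_pmf a \<union> set_pmf b"
  have f: "finite ?A" using assms by simp
  have "l1_dist a b = (\<Sum>x\<in>?A. (pmf a x - pmf b x) * sgn (pmf a x - pmf b x))"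
    unfolding l1_dist_def by (rule sum.cong) (auto simp: abs_sgn)
  then show ?thesis by (simp add: expect_superset[OF f] left_diff_distrib sum_subtractf)
qed

lemma l1_dist_bind_le:
  assumes "finite_pmf a" "finite_pmf b" "\<And>x. x \<in> set_pmf a \<union> set_pmf b \<Longrightarrow> finite_pmf (N x)"
  shows "l1_dist (bind_pmf a N) (bind_pmf b N) \<le> l1_dist a b"
proof -
  let ?s = "\<lambda>y. sgn (pmf (bind_pmf a N) y - pmf (bind_pmf b N) y)"
  have "l1_dist (bind_pmf a N) (bind_pmf b N) = expect a (\<lambda>x. expect (N x) ?s) - expect b (\<lambda>x. expect (N x) ?s)"
    using assms by (simp add: l1_dist_eq_expect_sgn expect_bind)
  also have "\<dots> \<le> 1 * l1_dist a b"
  proof (rule expect_diff_le_l1_dist[OF assms(1,2)])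
    fix x assume x: "x \<in> set_pmf a \<union> set_pmf b"
    have "\<bar>expect (N x) ?s\<bar> \<le> expect (N x) (\<lambda>y. \<bar>?s y\<bar>)" by (rule expect_abs_le)
    also have "\<dots> \<le> 1" using assms(3)[OF x] by (intro expect_le_const) (auto simp: abs_sgn_eq)
    finally show "\<bar>expect (N x) ?s\<bar> \<le> 1" .
  qed
  finally show ?thesis by simp
qed

lemma l1_dist_map_le:
  "finite_pmf a \<Longrightarrow> finite_pmf b \<Longrightarrow> l1_dist (map_pmf g a) (map_pmf g b) \<le> l1_dist a b"
  unfolding map_pmf_def by (rule l1_dist_bind_le) auto

lemma l1_dist_bind_right_le:
  assumes "finite_pmf a" "\<And>x. x \<in> set_pmf a \<Longrightarrow> finite_pmf (N1 x)" "\<And>x. x \<in> set_pmf a \<Longrightarrow> finite_pmf (N2 x)"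
  shows "l1_dist (bind_pmf a N1) (bind_pmf a N2) \<le> expect a (\<lambda>x. l1_dist (N1 x) (N2 x))"
proof -
  let ?s = "\<lambda>y. sgn (pmf (bind_pmf a N1) y - pmf (bind_pmf a N2) y)"
  have "l1_dist (bind_pmf a N1) (bind_pmf a N2) = expect a (\<lambda>x. expect (N1 x) ?s - expect (N2 x) ?s)"
    using assms by (simp add: l1_dist_eq_expect_sgn expect_bind expect_diff)
  also have "\<dots> \<le> expect a (\<lambda>x. 1 * l1_dist (N1 x) (N2 x))"
    by (rule expect_mono, rule expect_diff_le_l1_dist) (use assms in \<open>auto simp: abs_sgn_eq\<close>)
  finally show ?thesis by simp
qed

section \<open>Conditional distributions\<close>

definition cond_snd :: "('a \<times> 'b) pmf \<Rightarrow> 'a \<Rightarrow> 'b pmf" where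
  "cond_snd W a = map_pmf snd (cond_pmf W {t. fst t = a})"

lemma pmf_cond_snd:
  assumes a: "a \<in> set_pmf (map_pmf fst W)"
  shows "pmf (cond_snd W a) b = pmf W (a, b) / pmf (map_pmf fst W) a"
proof -
  have ne: "set_pmf W \<inter> {t. fst t = a} \<noteq> {}" using a by auto
  let ?C = "cond_pmf W {t. fst t = a}"
  have sC: "set_pmf ?C = set_pmf W \<inter> {t. fst t = a}" using ne by simp
  have "pmf (cond_snd W a) b = measure ?C (snd -` {b} \<inter> set_pmf ?C)"
    unfolding cond_snd_def pmf_map by (simp add: measure_Int_set_pmf)
  also have "snd -` {b} \<inter> set_pmf ?C = {(a, b)} \<inter> set_pmf ?C" using sC by auto
  also have "measure ?C ({(a, b)} \<inter> set_pmf ?C) = pmf ?C (a, b)"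
    by (simp add: measure_Int_set_pmf measure_pmf_single)
  also have "\<dots> = pmf W (a, b) / measure W {t. fst t = a}" using ne by (simp add: pmf_cond)
  also have "measure W {t. fst t = a} = pmf (map_pmf fst W) a"
    by (simp add: pmf_map vimage_def)
  finally show ?thesis .
qed

lemma set_cond_snd:
  assumes "a \<in> set_pmf (map_pmf fst W)"
  shows "set_pmf (cond_snd W a) = {b. (a, b) \<in> set_pmf W}"
proof -
  have "set_pmf W \<inter> {t. fst t = a} \<noteq> {}" using assms by auto
  then show ?thesis unfolding cond_snd_def by force
qed

lemma cond_snd_map:
  assumes "a \<in> set_pmf (map_pmf fst W)"
  shows "cond_snd (map_pmf (\<lambda>(a, b). (a, f b)) W) a = map_pmf f (cond_snd W a)"
proof -
  have e: "(\<lambda>(a, b). (a, f b)) -` {t. fst t = a} = {t. fst t = a}" by auto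
  have ne: "set_pmf W \<inter> (\<lambda>(a, b). (a, f b)) -` {t. fst t = a} \<noteq> {}" using assms e by auto
  show ?thesis
    unfolding cond_snd_def cond_map_pmf[OF ne] e by (simp add: pmf.map_comp o_def case_prod_unfold)
qed

lemma pmf_map_Pair: "pmf (map_pmf (Pair a) X) (a0, b0) = (if a = a0 then pmf X b0 else 0)"
proof -
  have "Pair a -` {(a0, b0)} = (if a = a0 then {b0} else {})" by auto
  then show ?thesis by (simp add: pmf_map measure_pmf_single)
qed

lemma disintegrate_pmf:
  assumes "finite_pmf W"
  shows "W = bind_pmf (map_pmf fst W) (\<lambda>a. map_pmf (Pair a) (cond_snd W a))"
proof (rule pmf_eqI)
  fix z :: "'a \<times> 'b"
  obtain a0 b0 where z: "z = (a0, b0)" by (cases z)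
  have fm: "finite_pmf (map_pmf fst W)" using assms by simp
  have "pmf (bind_pmf (map_pmf fst W) (\<lambda>a. map_pmf (Pair a) (cond_snd W a))) z =
        expect (map_pmf fst W) (\<lambda>a. if a = a0 then pmf (cond_snd W a0) b0 else 0)"
    unfolding z pmf_bind_expect[OF fm] pmf_map_Pair by (rule expect_cong) auto
  also have "\<dots> = pmf (map_pmf fst W) a0 * pmf (cond_snd W a0) b0" using fm by (rule expect_indicator_point)
  also have "\<dots> = pmf W z"
  proof (cases "a0 \<in> set_pmf (map_pmf fst W)")
    case True
    then have "pmf (map_pmf fst W) a0 \<noteq> 0" by (simp add: set_pmf_iff del: set_map_pmf)
    then show ?thesis using True by (simp add: pmf_cond_snd z)
  next
    case False
    then have "z \<notin> set_pmf W" using z by force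
    moreover from False have "pmf (map_pmf fst W) a0 = 0" by (meson set_pmf_iff)
    ultimately show ?thesis by (simp add: set_pmf_iff)
  qed
  finally show "pmf W z = pmf (bind_pmf (map_pmf fst W) (\<lambda>a. map_pmf (Pair a) (cond_snd W a))) z" by simp
qed


section \<open>Correcting a distribution to a target\<close>

text \<open>The correction channel keeps its input \<open>b\<close> with the largest probability compatible with the
  target \<open>\<pi>\<close> and otherwise resamples from the normalised deficit \<open>(\<pi> - \<nu>)\<^sup>+\<close>; it maps \<open>\<nu>\<close> onto
  \<open>\<pi>\<close> while moving only mass \<open>l1_dist \<nu> \<pi> / 2\<close>.\<close>

definition keep_prob :: "'b pmf \<Rightarrow> 'b pmf \<Rightarrow> 'b \<Rightarrow> real" where
  "keep_prob \<nu> \<pi> b = (if pmf \<nu> b \<le> pmf \<pi> b then 1 else pmf \<pi> b / pmf \<nu> b)"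

definition deficit_pmf :: "'b pmf \<Rightarrow> 'b pmf \<Rightarrow> 'b pmf" where
  "deficit_pmf \<nu> \<pi> = embed_pmf (\<lambda>x. max 0 (pmf \<pi> x - pmf \<nu> x) /
     (\<Sum>y\<in>set_pmf \<nu> \<union> set_pmf \<pi>. max 0 (pmf \<pi> y - pmf \<nu> y)))"

definition correction :: "'b pmf \<Rightarrow> 'b pmf \<Rightarrow> 'b \<Rightarrow> 'b pmf" where
  "correction \<nu> \<pi> b = bind_pmf (bernoulli_pmf (keep_prob \<nu> \<pi> b))
     (\<lambda>keep. if keep then return_pmf b else deficit_pmf \<nu> \<pi>)"

lemma bernoulli_pmf_one: "bernoulli_pmf 1 = return_pmf True"
proof (rule pmf_eqI)
  fix i show "pmf (bernoulli_pmf 1) i = pmf (return_pmf True) i" by (cases i) simp_all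
qed

lemma keep_prob_bounds: "0 \<le> keep_prob \<nu> \<pi> b" "keep_prob \<nu> \<pi> b \<le> 1"
  unfolding keep_prob_def by (auto simp: divide_le_eq_1)

context
  fixes \<nu> \<pi> :: "'b pmf"
  assumes fin: "finite_pmf \<nu>" "finite_pmf \<pi>"
begin

private abbreviation "A \<equiv> set_pmf \<nu> \<union> set_pmf \<pi>"
private abbreviation "excess \<equiv> (\<Sum>x\<in>A. max 0 (pmf \<nu> x - pmf \<pi> x))"

private lemma sum_deficit_eq_excess: "(\<Sum>x\<in>A. max 0 (pmf \<pi> x - pmf \<nu> x)) = excess"
proof -
  have fA: "finite A" using fin by simp
  have "(\<Sum>x\<in>A. max 0 (pmf \<pi> x - pmf \<nu> x)) - excess = (\<Sum>x\<in>A. pmf \<pi> x) - (\<Sum>x\<in>A. pmf \<nu> x)"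
    unfolding sum_subtractf[symmetric] by (rule sum.cong) auto
  also have "\<dots> = 0" using fA by (simp add: sum_pmf_superset)
  finally show ?thesis by simp
qed

private lemma l1_dist_eq_excess: "l1_dist \<nu> \<pi> = 2 * excess"
proof -
  have "l1_dist \<nu> \<pi> = (\<Sum>x\<in>A. max 0 (pmf \<pi> x - pmf \<nu> x)) + excess"
    unfolding l1_dist_def sum.distrib[symmetric] by (rule sum.cong) auto
  then show ?thesis by (simp add: sum_deficit_eq_excess)
qed

private lemma expect_reject_eq: "expect \<nu> (\<lambda>b. 1 - keep_prob \<nu> \<pi> b) = excess"
proof -
  have "expect \<nu> (\<lambda>b. 1 - keep_prob \<nu> \<pi> b) = (\<Sum>x\<in>A. pmf \<nu> x * (1 - keep_prob \<nu> \<pi> x))"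
    using fin by (intro expect_superset) auto
  also have "\<dots> = excess" by (rule sum.cong) (auto simp: keep_prob_def field_simps)
  finally show ?thesis .
qed

lemma expect_reject_le_l1_dist: "expect \<nu> (\<lambda>b. 1 - keep_prob \<nu> \<pi> b) \<le> l1_dist \<nu> \<pi>"
  using expect_reject_eq l1_dist_eq_excess sum_nonneg[of A "\<lambda>x. max 0 (pmf \<nu> x - pmf \<pi> x)"] by simp

private lemma excess_pos: "\<nu> \<noteq> \<pi> \<Longrightarrow> 0 < excess"
proof -
  assume "\<nu> \<noteq> \<pi>"
  then obtain x where x: "pmf \<nu> x \<noteq> pmf \<pi> x" by (metis pmf_eqI)
  then have xA: "x \<in> A" by (auto simp: set_pmf_iff)
  have fA: "finite A" using fin by simp
  have le1: "max 0 (pmf \<nu> x - pmf \<pi> x) \<le> excess"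
    by (rule member_le_sum[OF xA _ fA]) simp
  have le2: "max 0 (pmf \<pi> x - pmf \<nu> x) \<le> excess"
    unfolding sum_deficit_eq_excess[symmetric] by (rule member_le_sum[OF xA _ fA]) simp
  show ?thesis using x le1 le2 by (cases "pmf \<pi> x < pmf \<nu> x") auto
qed

private lemma pmf_deficit_pmf:
  assumes "\<nu> \<noteq> \<pi>"
  shows "pmf (deficit_pmf \<nu> \<pi>) x = max 0 (pmf \<pi> x - pmf \<nu> x) / excess"
proof -
  have pos: "0 < excess" using excess_pos[OF assms] .
  have "(\<integral>\<^sup>+x. ennreal (max 0 (pmf \<pi> x - pmf \<nu> x) / excess) \<partial>count_space UNIV) =
      (\<Sum>x\<in>A. ennreal (max 0 (pmf \<pi> x - pmf \<nu> x) / excess))"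
    by (rule nn_integral_count_space') (auto simp: set_pmf_iff fin)
  also have "\<dots> = ennreal ((\<Sum>x\<in>A. max 0 (pmf \<pi> x - pmf \<nu> x)) / excess)"
    using pos by (simp add: sum_divide_distrib)
  also have "\<dots> = 1" using pos by (simp add: sum_deficit_eq_excess)
  finally show ?thesis unfolding deficit_pmf_def sum_deficit_eq_excess
    using pos by (subst pmf_embed_pmf) auto
qed

private lemma set_deficit_pmf: "\<nu> \<noteq> \<pi> \<Longrightarrow> set_pmf (deficit_pmf \<nu> \<pi>) \<subseteq> set_pmf \<pi>"
  by (auto simp: set_pmf_iff pmf_deficit_pmf max_def split: if_splits)

lemma set_correction: "set_pmf (correction \<nu> \<pi> b) \<subseteq> set_pmf \<pi> \<union> {b}"
proof (cases "keep_prob \<nu> \<pi> b = 1")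
  case True then show ?thesis by (simp add: correction_def bernoulli_pmf_one bind_return_pmf)
next
  case False
  then have "\<nu> \<noteq> \<pi>" by (auto simp: keep_prob_def)
  then show ?thesis using set_deficit_pmf by (auto simp: correction_def split: if_splits)
qed

lemma finite_pmf_correction: "finite_pmf (correction \<nu> \<pi> b)"
  by (rule finite_subset[OF set_correction]) (simp add: fin)

lemma expect_correction_le:
  assumes "0 \<le> g b" "\<And>c. c \<in> set_pmf \<pi> \<Longrightarrow> g c \<le> B"
  shows "expect (correction \<nu> \<pi> b) g \<le> g b + B * (1 - keep_prob \<nu> \<pi> b)"
proof (cases "keep_prob \<nu> \<pi> b = 1")
  case True then show ?thesis by (simp add: correction_def bernoulli_pmf_one bind_return_pmf)
next
  case False
  let ?k = "keep_prob \<nu> \<pi> b"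
  have ne: "\<nu> \<noteq> \<pi>" using False by (auto simp: keep_prob_def)
  have fD: "finite_pmf (deficit_pmf \<nu> \<pi>)" by (rule finite_subset[OF set_deficit_pmf[OF ne] fin(2)])
  have "expect (correction \<nu> \<pi> b) g = expect (bernoulli_pmf ?k)
      (\<lambda>keep. expect (if keep then return_pmf b else deficit_pmf \<nu> \<pi>) g)"
    unfolding correction_def using fD by (intro expect_bind) auto
  also have "\<dots> = ?k * g b + (1 - ?k) * expect (deficit_pmf \<nu> \<pi>) g"
    by (subst expect_bernoulli[OF keep_prob_bounds]) simp
  also have "\<dots> \<le> g b + (1 - ?k) * B"
  proof (rule add_mono)
    show "?k * g b \<le> g b" by (rule mult_left_le_one_le[OF assms(1) keep_prob_bounds])
    have "expect (deficit_pmf \<nu> \<pi>) g \<le> B"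
      using set_deficit_pmf[OF ne] assms(2) fD by (intro expect_le_const) auto
    then show "(1 - ?k) * expect (deficit_pmf \<nu> \<pi>) g \<le> (1 - ?k) * B"
      using keep_prob_bounds(2)[of \<nu> \<pi> b] by (intro mult_left_mono) auto
  qed
  finally show ?thesis by (simp add: mult.commute)
qed

lemma bind_correction: "bind_pmf \<nu> (correction \<nu> \<pi>) = \<pi>"
proof (rule pmf_eqI)
  fix y
  have "pmf (bind_pmf \<nu> (correction \<nu> \<pi>)) y =
      expect \<nu> (\<lambda>b. (if b = y then keep_prob \<nu> \<pi> y else 0) + (1 - keep_prob \<nu> \<pi> b) * pmf (deficit_pmf \<nu> \<pi>) y)"
    unfolding pmf_bind_expect[OF fin(1)] correction_def
    by (rule expect_cong) (simp add: pmf_bind_expect expect_bernoulli keep_prob_bounds)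
  also have "\<dots> = pmf \<nu> y * keep_prob \<nu> \<pi> y + excess * pmf (deficit_pmf \<nu> \<pi>) y"
    using fin by (simp add: expect_add expect_multc expect_indicator_point expect_reject_eq)
  also have "\<dots> = pmf \<pi> y"
  proof (cases "\<nu> = \<pi>")
    case True then show ?thesis by (simp add: keep_prob_def)
  next
    case False then show ?thesis using excess_pos by (auto simp: pmf_deficit_pmf keep_prob_def)
  qed
  finally show "pmf (bind_pmf \<nu> (correction \<nu> \<pi>)) y = pmf \<pi> y" .
qed

end


section \<open>Uniform mixtures and empirical soft covering\<close>

definition uniform_mix :: "('c \<Rightarrow> 'v pmf) \<Rightarrow> 'c list \<Rightarrow> 'v pmf" where
  "uniform_mix G cs = bind_pmf (pmf_of_set {..<length cs}) (\<lambda>i. G (cs ! i))"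

lemma set_pmf_of_lessThan: "cs \<noteq> [] \<Longrightarrow> set_pmf (pmf_of_set {..<length cs}) = {..<length cs}"
  by (simp add: lessThan_empty_iff)

lemma sum_list_map_eq_sum_lessThan: "sum_list (map f cs) = (\<Sum>i<length cs. f (cs ! i))"
  by (simp add: sum_list_sum_nth lessThan_atLeast0)

lemma sum_list_map_eq_sum_atLeastAtMost: "sum_list (map f cs) = (\<Sum>k\<in>{1..length cs}. f (cs ! (k - 1)))"
proof -
  have "(\<Sum>k\<in>{1..length cs}. f (cs ! (k - 1))) = (\<Sum>i<length cs. f (cs ! i))"
    by (rule sum.reindex_bij_witness[of _ Suc "\<lambda>k. k - 1"]) auto
  then show ?thesis by (simp add: sum_list_map_eq_sum_lessThan)
qed

lemma sum_list_map_concat: "sum_list (map f (concat xss)) = sum_list (map (\<lambda>xs. sum_list (map f xs)) xss)"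
  by (induction xss) simp_all

lemma sum_list_map_divide: "sum_list (map (\<lambda>x. f x / c) xs) = sum_list (map f xs) / (c :: real)"
  by (induction xs) (simp_all add: add_divide_distrib)

lemma sum_list_map_diff_const:
  "sum_list (map (\<lambda>c. f c - k) cs) = sum_list (map f cs) - real (length cs) * k"
  by (induction cs) (auto simp: algebra_simps)

lemma pmf_uniform_mix:
  "cs \<noteq> [] \<Longrightarrow> pmf (uniform_mix G cs) x = sum_list (map (\<lambda>c. pmf (G c) x) cs) / length cs"
  unfolding uniform_mix_def by (subst pmf_bind_pmf_of_set) (auto simp: sum_list_map_eq_sum_lessThan)

lemma set_uniform_mix: "cs \<noteq> [] \<Longrightarrow> set_pmf (uniform_mix G cs) = (\<Union>c\<in>set cs. set_pmf (G c))"
  unfolding uniform_mix_def by (fastforce simp: in_set_conv_nth set_pmf_of_lessThan)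

lemma finite_pmf_uniform_mix:
  "cs \<noteq> [] \<Longrightarrow> (\<And>c. c \<in> set cs \<Longrightarrow> finite_pmf (G c)) \<Longrightarrow> finite_pmf (uniform_mix G cs)"
  by (simp add: set_uniform_mix)

lemma uniform_mix_concat:
  assumes "rws \<noteq> []" "\<And>r. r \<in> set rws \<Longrightarrow> length r = m" "m > 0"
  shows "bind_pmf (pmf_of_set {1..length rws}) (\<lambda>k. uniform_mix G (rws ! (k - 1))) = uniform_mix G (concat rws)"
proof (rule pmf_eqI)
  fix x
  have ne: "concat rws \<noteq> []" using assms by (cases rws) auto
  have rne: "\<And>r. r \<in> set rws \<Longrightarrow> r \<noteq> []" using assms by auto
  have lc: "length (concat rws) = length rws * m"
    using assms(2) by (induction rws) auto
  have "pmf (bind_pmf (pmf_of_set {1..length rws}) (\<lambda>k. uniform_mix G (rws ! (k - 1)))) x =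
     sum_list (map (\<lambda>r. pmf (uniform_mix G r) x) rws) / length rws"
    using assms by (subst pmf_bind_pmf_of_set) (auto simp: Suc_le_eq sum_list_map_eq_sum_atLeastAtMost)
  also have "sum_list (map (\<lambda>r. pmf (uniform_mix G r) x) rws) =
      sum_list (map (\<lambda>r. sum_list (map (\<lambda>c. pmf (G c) x) r) / m) rws)"
    by (rule arg_cong[where f=sum_list], rule map_cong) (auto simp: pmf_uniform_mix rne assms(2))
  also have "\<dots> = sum_list (map (\<lambda>c. pmf (G c) x) (concat rws)) / m"
    by (simp add: sum_list_map_divide sum_list_map_concat o_def)
  finally show "pmf (bind_pmf (pmf_of_set {1..length rws}) (\<lambda>k. uniform_mix G (rws ! (k - 1)))) x =
      pmf (uniform_mix G (concat rws)) x"
    unfolding pmf_uniform_mix[OF ne] lc by (simp add: mult.commute)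
qed

lemma l1_dist_uniform_mix_eq:
  assumes "finite X" "cs \<noteq> []" "\<And>c. c \<in> set cs \<Longrightarrow> set_pmf (A c) \<subseteq> X" "set_pmf \<pi> \<subseteq> X"
  shows "l1_dist (uniform_mix A cs) \<pi> = (\<Sum>x\<in>X. \<bar>sum_list (map (\<lambda>c. pmf (A c) x) cs) / length cs - pmf \<pi> x\<bar>)"
  using assms by (subst l1_dist_superset[OF assms(1)]) (auto simp: set_uniform_mix pmf_uniform_mix)

lemma expect_abs_sum_list_centred_le:
  assumes "finite_pmf Q" "\<And>c. 0 \<le> f c" "\<And>c. f c \<le> T" "0 < L"
  shows "expect (iid_pmf L Q) (\<lambda>cs. \<bar>sum_list (map (\<lambda>c. f c - expect Q f) cs)\<bar>) / L \<le> sqrt (T * expect Q f / L)"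
proof -
  let ?m = "expect Q f"
  have "expect (iid_pmf L Q) (\<lambda>cs. \<bar>sum_list (map (\<lambda>c. f c - ?m) cs)\<bar>)
      \<le> sqrt (expect (iid_pmf L Q) (\<lambda>cs. (sum_list (map (\<lambda>c. f c - ?m) cs))\<^sup>2))"
    using assms(1) by (intro expect_abs_le_sqrt) simp
  also have "expect (iid_pmf L Q) (\<lambda>cs. (sum_list (map (\<lambda>c. f c - ?m) cs))\<^sup>2) = L * expect Q (\<lambda>c. (f c - ?m)\<^sup>2)"
    using assms(1) by (intro expect_iid_sum_list_square) (simp_all add: expect_diff)
  also have "expect Q (\<lambda>c. (f c - ?m)\<^sup>2) \<le> T * ?m"
  proof -
    have "expect Q (\<lambda>c. (f c - ?m)\<^sup>2) = expect Q (\<lambda>c. (f c)\<^sup>2 - 2 * ?m * f c + ?m\<^sup>2)"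
      by (rule expect_cong) (simp add: power2_eq_square algebra_simps)
    also have "\<dots> = expect Q (\<lambda>c. (f c)\<^sup>2) - ?m\<^sup>2"
      using assms(1) by (simp add: expect_add expect_diff expect_cmult power2_eq_square)
    also have "\<dots> \<le> expect Q (\<lambda>c. (f c)\<^sup>2)" by simp
    also have "\<dots> \<le> expect Q (\<lambda>c. T * f c)"
      using assms(2,3) by (intro expect_mono) (simp add: power2_eq_square mult_right_mono)
    finally show ?thesis by (simp add: expect_cmult)
  qed
  finally have "expect (iid_pmf L Q) (\<lambda>cs. \<bar>sum_list (map (\<lambda>c. f c - ?m) cs)\<bar>) \<le> sqrt (L * (T * ?m))"
    by (meson mult_left_mono of_nat_0_le_iff order_trans real_sqrt_le_mono)
  also have "sqrt (L * (T * ?m)) = L * sqrt (T * ?m / L)"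
    using assms(4) by (simp add: real_sqrt_mult real_sqrt_divide field_simps)
  finally show ?thesis using assms(4) by (simp add: field_simps)
qed

lemma abs_mean_split_le:
  fixes f g :: "'c \<Rightarrow> real"
  assumes "length cs = L" "0 < L" "\<And>c. 0 \<le> g c" "0 \<le> m'"
  shows "\<bar>sum_list (map (\<lambda>c. f c + g c) cs) / L - (m + m')\<bar>
    \<le> \<bar>sum_list (map (\<lambda>c. f c - m) cs)\<bar> / L + sum_list (map g cs) / L + m'"
proof -
  have "sum_list (map (\<lambda>c. f c + g c) cs) / L - (m + m') =
     sum_list (map (\<lambda>c. f c - m) cs) / L + sum_list (map g cs) / L - m'"
    using assms(1,2) by (simp add: sum_list_addf sum_list_map_diff_const field_simps)
  moreover have "0 \<le> sum_list (map g cs) / L"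
    using assms(3) by (intro divide_nonneg_nonneg sum_list_nonneg) auto
  moreover have "\<bar>sum_list (map (\<lambda>c. f c - m) cs) / L\<bar> = \<bar>sum_list (map (\<lambda>c. f c - m) cs)\<bar> / L"
    by (simp add: abs_divide)
  ultimately show ?thesis using assms(4) by arith
qed

text \<open>Likelihoods below the threshold \<open>T\<close> are controlled by their variance, the rest by their mass.\<close>

lemma expect_l1_dist_uniform_mix_le:
  fixes Q :: "'c pmf" and A :: "'c \<Rightarrow> 'x pmf" and T :: "'x \<Rightarrow> real" and L :: nat
  defines "\<pi> \<equiv> bind_pmf Q A"
  assumes fQ: "finite_pmf Q" and fA: "\<And>c. c \<in> set_pmf Q \<Longrightarrow> finite_pmf (A c)"
    and L: "L > 0" and T: "\<And>x. 0 \<le> T x"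
  shows "expect (iid_pmf L Q) (\<lambda>cs. l1_dist (uniform_mix A cs) \<pi>)
     \<le> (\<Sum>x\<in>set_pmf \<pi>. sqrt (T x * pmf \<pi> x / L))
       + 2 * expect Q (\<lambda>c. expect (A c) (\<lambda>x. if pmf (A c) x \<le> T x then 0 else 1))"
proof -
  define X where "X = set_pmf \<pi>"
  define a where "a c x = pmf (A c) x" for c x
  define a1 where "a1 c x = (if a c x \<le> T x then a c x else 0)" for c x
  define a2 where "a2 c x = (if a c x \<le> T x then 0 else a c x)" for c x
  define m1 where "m1 x = expect Q (\<lambda>c. a1 c x)" for x
  define m2 where "m2 x = expect Q (\<lambda>c. a2 c x)" for x
  have fX: "finite X" using fQ fA by (auto simp: X_def \<pi>_def)
  have setA: "\<And>c. c \<in> set_pmf Q \<Longrightarrow> set_pmf (A c) \<subseteq> X" by (auto simp: X_def \<pi>_def)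
  have a2_nn: "0 \<le> a2 c x" for c x by (simp add: a2_def a_def)
  have m2_nn: "0 \<le> m2 x" for x unfolding m2_def by (rule expect_nonneg) (simp add: a2_nn)
  have m12: "m1 x + m2 x = pmf \<pi> x" for x
  proof -
    have "m1 x + m2 x = expect Q (\<lambda>c. a c x)"
      unfolding m1_def m2_def expect_add[symmetric] by (rule expect_cong) (simp add: a1_def a2_def)
    then show ?thesis by (simp add: \<pi>_def pmf_bind_expect[OF fQ] a_def)
  qed
  have pointwise: "\<bar>sum_list (map (\<lambda>c. a c x) cs) / L - pmf \<pi> x\<bar> \<le>
      \<bar>sum_list (map (\<lambda>c. a1 c x - m1 x) cs)\<bar> / L + sum_list (map (\<lambda>c. a2 c x) cs) / L + m2 x"
    if len: "length cs = L" for cs x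
  proof -
    have "sum_list (map (\<lambda>c. a c x) cs) = sum_list (map (\<lambda>c. a1 c x + a2 c x) cs)"
      by (rule arg_cong[where f=sum_list], rule map_cong) (auto simp: a1_def a2_def)
    then show ?thesis unfolding m12[of x, symmetric]
      using abs_mean_split_le[OF len L, of "\<lambda>c. a2 c x" "m2 x" "\<lambda>c. a1 c x" "m1 x"] a2_nn m2_nn by simp
  qed
  have l1_mix: "l1_dist (uniform_mix A cs) \<pi> \<le> (\<Sum>x\<in>X.
      \<bar>sum_list (map (\<lambda>c. a1 c x - m1 x) cs)\<bar> / L + sum_list (map (\<lambda>c. a2 c x) cs) / L + m2 x)"
    if cs: "cs \<in> set_pmf (iid_pmf L Q)" for cs
  proof -
    have len: "length cs = L" and sub: "set cs \<subseteq> set_pmf Q" using cs by (auto simp: set_iid_pmf)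
    have "l1_dist (uniform_mix A cs) \<pi> = (\<Sum>x\<in>X. \<bar>sum_list (map (\<lambda>c. a c x) cs) / length cs - pmf \<pi> x\<bar>)"
      unfolding a_def using fX len L sub setA by (intro l1_dist_uniform_mix_eq) (auto simp: X_def)
    then show ?thesis using pointwise[OF len] len by (simp add: sum_mono)
  qed
  have typical: "expect (iid_pmf L Q) (\<lambda>cs. \<bar>sum_list (map (\<lambda>c. a1 c x - m1 x) cs)\<bar>) / L
      \<le> sqrt (T x * pmf \<pi> x / L)" for x
  proof -
    have "expect (iid_pmf L Q) (\<lambda>cs. \<bar>sum_list (map (\<lambda>c. a1 c x - m1 x) cs)\<bar>) / L \<le> sqrt (T x * m1 x / L)"
      unfolding m1_def using fQ T[of x] L by (intro expect_abs_sum_list_centred_le) (auto simp: a1_def a_def)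
    also have "\<dots> \<le> sqrt (T x * pmf \<pi> x / L)"
      using m12[of x] m2_nn[of x] T[of x] by (intro real_sqrt_le_mono divide_right_mono mult_left_mono) auto
    finally show ?thesis .
  qed
  have atypical: "(\<Sum>x\<in>X. m2 x) = expect Q (\<lambda>c. expect (A c) (\<lambda>x. if pmf (A c) x \<le> T x then 0 else 1))"
    unfolding m2_def expect_sum[symmetric]
    by (rule expect_cong) (auto simp: expect_superset[OF fX setA] a2_def a_def intro!: sum.cong)
  have "expect (iid_pmf L Q) (\<lambda>cs. l1_dist (uniform_mix A cs) \<pi>) \<le> expect (iid_pmf L Q) (\<lambda>cs. \<Sum>x\<in>X.
      \<bar>sum_list (map (\<lambda>c. a1 c x - m1 x) cs)\<bar> / L + sum_list (map (\<lambda>c. a2 c x) cs) / L + m2 x)"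
    by (rule expect_mono) (rule l1_mix)
  also have "\<dots> = (\<Sum>x\<in>X. expect (iid_pmf L Q) (\<lambda>cs. \<bar>sum_list (map (\<lambda>c. a1 c x - m1 x) cs)\<bar>) / L
      + real L * m2 x / L + m2 x)"
    using fQ by (simp add: expect_sum expect_add expect_divc expect_iid_sum_list m2_def)
  also have "\<dots> \<le> (\<Sum>x\<in>X. sqrt (T x * pmf \<pi> x / L) + 2 * m2 x)"
    using L typical by (intro sum_mono) auto
  also have "\<dots> = (\<Sum>x\<in>X. sqrt (T x * pmf \<pi> x / L)) + 2 * (\<Sum>x\<in>X. m2 x)"
    by (simp add: sum.distrib sum_distrib_left)
  finally show ?thesis unfolding X_def[symmetric] atypical[symmetric] .
qed


section \<open>Mutual information of finitely supported laws\<close>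

lemma distributed_pmf:
  fixes A :: "'c \<Rightarrow> 'd::countable"
  shows "distributed (measure_pmf P) (count_space UNIV) A (\<lambda>x. ennreal (pmf (map_pmf A P) x))"
  unfolding distributed_def
  by (simp add: map_pmf_rep_eq[symmetric] measure_pmf_eq_density[of "map_pmf A P"])

lemma mi_finite:
  fixes P :: "'c pmf" and A :: "'c \<Rightarrow> 'd::countable" and B :: "'c \<Rightarrow> 'e::countable"
  assumes fin: "finite_pmf P"
  defines "J \<equiv> map_pmf (\<lambda>c. (A c, B c)) P"
  shows "mi P A B =
    (\<Sum>z\<in>set_pmf J. pmf J z * log 2 (pmf J z / (pmf (map_pmf A P) (fst z) * pmf (map_pmf B P) (snd z))))"
proof -
  interpret information_space "measure_pmf P" 2 by standard simp
  have finJ: "finite_pmf J" using fin by (simp add: J_def)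
  have cs: "count_space (UNIV::'d set) \<Otimes>\<^sub>M count_space (UNIV::'e set) = count_space UNIV"
    by (simp add: pair_measure_countable)
  have dJ: "distributed (measure_pmf P) (count_space UNIV \<Otimes>\<^sub>M count_space UNIV) (\<lambda>c. (A c, B c))
       (\<lambda>x. ennreal (pmf J x))"
    unfolding cs J_def by (rule distributed_pmf)
  have "mi P A B = integral\<^sup>L (count_space UNIV \<Otimes>\<^sub>M count_space UNIV)
      (\<lambda>x. pmf J x * log 2 (pmf J x / (pmf (map_pmf A P) (fst x) * pmf (map_pmf B P) (snd x))))"
    unfolding mi_def
    by (rule mutual_information_distr[OF _ _ distributed_pmf _ distributed_pmf _ dJ])
       (auto intro!: sigma_finite_measure_count_space_countable)
  also have "\<dots> = (\<Sum>z\<in>set_pmf J. pmf J z * log 2 (pmf J z / (pmf (map_pmf A P) (fst z) * pmf (map_pmf B P) (snd z))))"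
    unfolding cs
    by (subst lebesgue_integral_count_space_finite_support, rule finite_subset[OF _ finJ])
       (auto simp: set_pmf_iff simp del: set_map_pmf intro!: sum.mono_neutral_left finJ)
  finally show ?thesis .
qed

lemma mi_eq_mi_joint:
  fixes A :: "'c \<Rightarrow> 'd::countable" and B :: "'c \<Rightarrow> 'e::countable"
  assumes "finite_pmf P"
  shows "mi P A B = mi (map_pmf (\<lambda>c. (A c, B c)) P) fst snd"
  using assms by (simp add: mi_finite pmf.map_comp o_def)

section \<open>Soft covering\<close>

lemma expect_iid_sum_list_large_le:
  assumes "finite_pmf W" "expect W g = 0" "0 < t"
  shows "expect (iid_pmf n W) (\<lambda>ps. if t < sum_list (map g ps) then 1 else 0)
    \<le> n * expect W (\<lambda>z. (g z)\<^sup>2) / t\<^sup>2"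
proof -
  have "expect (iid_pmf n W) (\<lambda>ps. if t < sum_list (map g ps) then 1 else 0)
      \<le> expect (iid_pmf n W) (\<lambda>ps. (sum_list (map g ps))\<^sup>2 / t\<^sup>2)"
  proof (rule expect_mono)
    fix ps
    have "t < sum_list (map g ps) \<Longrightarrow> t\<^sup>2 \<le> (sum_list (map g ps))\<^sup>2"
      using assms(3) by (intro power_mono) auto
    then show "(if t < sum_list (map g ps) then 1 else 0) \<le> (sum_list (map g ps))\<^sup>2 / t\<^sup>2"
      using assms(3) by (auto simp: le_divide_eq)
  qed
  also have "\<dots> = n * expect W (\<lambda>z. (g z)\<^sup>2) / t\<^sup>2"
    using assms by (simp add: expect_divc expect_iid_sum_list_square)
  finally show ?thesis .
qed

lemma prod_list_pos: "(\<And>x. x \<in> set xs \<Longrightarrow> 0 < x) \<Longrightarrow> 0 < prod_list (xs :: real list)"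
  by (induction xs) auto

lemma log_prod_list: "(\<And>x. x \<in> set xs \<Longrightarrow> 0 < x) \<Longrightarrow> log b (prod_list xs) = sum_list (map (log b) xs)"
proof (induction xs)
  case (Cons x xs)
  have "0 < x" "0 < prod_list xs" using Cons.prems by (auto intro!: prod_list_pos)
  then have "log b (x * prod_list xs) = log b x + log b (prod_list xs)" by (simp add: log_mult)
  then show ?case using Cons by simp
qed simp

lemma sqrt_powr_div_le:
  assumes "2 powr (n * R) \<le> real L"
  shows "sqrt (2 powr (n * a) / L) \<le> 2 powr ((a - R) * n / 2)"
proof -
  have "0 < real L" using assms by (rule less_le_trans[rotated]) simp
  then have "sqrt (2 powr (n * a) / L) \<le> sqrt (2 powr (n * a) / 2 powr (n * R))"
    using assms by (intro real_sqrt_le_mono divide_left_mono) auto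
  also have "2 powr (n * a) / 2 powr (n * R) = 2 powr ((a - R) * n)"
    by (simp add: powr_diff[symmetric] algebra_simps)
  also have "sqrt (2 powr ((a - R) * n)) = 2 powr ((a - R) * n / 2)"
    using powr_half_sqrt_powr[of 2 "(a - R) * n"] by simp
  finally show ?thesis .
qed

locale soft_covering =
  fixes q :: "'u::countable pmf" and K :: "'u \<Rightarrow> 'v::countable pmf"
  assumes finite_q: "finite_pmf q" and finite_K: "\<And>u. u \<in> set_pmf q \<Longrightarrow> finite_pmf (K u)"
begin

definition "out = bind_pmf q K"
definition "joint = bind_pmf q (\<lambda>u. map_pmf (Pair u) (K u))"
definition "I = mi joint snd fst"
definition "info_density u v = log 2 (pmf (K u) v) - log 2 (pmf out v)"
definition "info_variance = expect joint (\<lambda>(u, v). (info_density u v - I)\<^sup>2)"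

lemma finite_out: "finite_pmf out" unfolding out_def using finite_q finite_K by simp
lemma finite_joint: "finite_pmf joint" unfolding joint_def using finite_q finite_K by simp

lemma set_joint: "set_pmf joint = {(u, v). u \<in> set_pmf q \<and> v \<in> set_pmf (K u)}"
  unfolding joint_def by auto

lemma pmf_joint: "pmf joint (u, v) = pmf q u * pmf (K u) v"
proof -
  have "pmf joint (u, v) = expect q (\<lambda>u'. if u' = u then pmf (K u) v else 0)"
    unfolding joint_def pmf_bind_expect[OF finite_q] pmf_map_Pair by (rule expect_cong) auto
  also have "\<dots> = pmf q u * pmf (K u) v" using finite_q by (rule expect_indicator_point)
  finally show ?thesis .
qed

lemma map_fst_joint: "map_pmf fst joint = q"
  by (simp add: joint_def map_bind_pmf pmf.map_comp o_def bind_return_pmf' map_pmf_def[symmetric])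

lemma map_snd_joint: "map_pmf snd joint = out"
  by (simp add: joint_def out_def map_bind_pmf pmf.map_comp o_def)

lemma pmf_out_pos: "(u, v) \<in> set_pmf joint \<Longrightarrow> 0 < pmf out v"
  using map_snd_joint by (metis pmf_positive pmf.set_map snd_conv imageI)

lemma I_eq_expect_info_density: "I = expect joint (\<lambda>(u, v). info_density u v)"
proof -
  define J where "J = map_pmf (\<lambda>c. (snd c, fst c)) joint"
  have pJ: "pmf J (v, u) = pmf joint (u, v)" for u v
    unfolding J_def using pmf_map_inj'[of "\<lambda>c. (snd c, fst c)" joint "(u, v)"] by (simp add: inj_def)
  have "I = expect J (\<lambda>z. log 2 (pmf J z / (pmf out (fst z) * pmf q (snd z))))"
    unfolding I_def mi_finite[OF finite_joint] expect_def J_def map_fst_joint map_snd_joint ..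
  also have "\<dots> = expect joint (\<lambda>(u, v). log 2 (pmf joint (u, v) / (pmf out v * pmf q u)))"
    using finite_joint by (simp add: J_def expect_map pJ[unfolded J_def] case_prod_unfold)
  also have "\<dots> = expect joint (\<lambda>(u, v). info_density u v)"
  proof (rule expect_cong, clarify)
    fix u v assume uv: "(u, v) \<in> set_pmf joint"
    then have "0 < pmf q u" "0 < pmf (K u) v" by (auto simp: set_joint pmf_positive)
    then show "log 2 (pmf joint (u, v) / (pmf out v * pmf q u)) = info_density u v"
      using pmf_out_pos[OF uv] by (simp add: pmf_joint info_density_def log_divide)
  qed
  finally show ?thesis .
qed

lemma I_eq_mi: "I = mi (bind_pmf q (\<lambda>u. map_pmf (\<lambda>v. (v, u)) (K u))) fst snd"
  unfolding I_def mi_eq_mi_joint[OF finite_joint]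
  by (simp add: joint_def map_bind_pmf pmf.map_comp o_def)

lemma log_likelihood_ratio_dmc:
  assumes "ps \<in> set_pmf (iid_pmf n joint)"
  shows "0 < pmf (dmc K (map fst ps)) (map snd ps)" "0 < pmf (iid_pmf n out) (map snd ps)"
    and "log 2 (pmf (dmc K (map fst ps)) (map snd ps)) - log 2 (pmf (iid_pmf n out) (map snd ps))
      = sum_list (map (\<lambda>(u, v). info_density u v) ps)"
proof -
  have len: "length ps = n" and sub: "set ps \<subseteq> set_pmf joint" using assms by (auto simp: set_iid_pmf)
  have fK: "\<And>u. u \<in> set (map fst ps) \<Longrightarrow> finite_pmf (K u)" using sub finite_K by (auto simp: set_joint)
  have dmc: "pmf (dmc K (map fst ps)) (map snd ps) = prod_list (map (\<lambda>(u, v). pmf (K u) v) ps)"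
    by (subst pmf_dmc[OF fK]) (simp_all add: zip_map_fst_snd)
  have iid: "pmf (iid_pmf n out) (map snd ps) = prod_list (map (\<lambda>(u, v). pmf out v) ps)"
    using finite_out len by (simp add: pmf_iid_pmf case_prod_unfold o_def)
  have posK: "\<And>z. z \<in> set (map (\<lambda>(u, v). pmf (K u) v) ps) \<Longrightarrow> 0 < z"
    using sub by (auto simp: set_joint pmf_positive)
  have posO: "\<And>z. z \<in> set (map (\<lambda>(u, v). pmf out v) ps) \<Longrightarrow> 0 < z"
    using sub pmf_out_pos by auto
  show "0 < pmf (dmc K (map fst ps)) (map snd ps)" "0 < pmf (iid_pmf n out) (map snd ps)"
    unfolding dmc iid using posK posO by (auto intro!: prod_list_pos)
  show "log 2 (pmf (dmc K (map fst ps)) (map snd ps)) - log 2 (pmf (iid_pmf n out) (map snd ps))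
      = sum_list (map (\<lambda>(u, v). info_density u v) ps)"
  proof -
    have "log 2 (pmf (dmc K (map fst ps)) (map snd ps)) = sum_list (map (\<lambda>(u, v). log 2 (pmf (K u) v)) ps)"
    proof -
      have "log 2 (prod_list (map (\<lambda>(u, v). pmf (K u) v) ps)) = sum_list (map (log 2) (map (\<lambda>(u, v). pmf (K u) v) ps))"
        by (rule log_prod_list) (rule posK)
      then show ?thesis using dmc by (simp add: o_def case_prod_unfold)
    qed
    moreover have "log 2 (pmf (iid_pmf n out) (map snd ps)) = sum_list (map (\<lambda>(u, v). log 2 (pmf out v)) ps)"
    proof -
      have "log 2 (prod_list (map (\<lambda>(u, v). pmf out v) ps)) = sum_list (map (log 2) (map (\<lambda>(u, v). pmf out v) ps))"
        by (rule log_prod_list) (rule posO)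
      then show ?thesis using iid by (simp add: o_def case_prod_unfold)
    qed
    ultimately show ?thesis by (simp add: info_density_def case_prod_unfold sum_list_subtractf)
  qed
qed

text \<open>An output whose likelihood exceeds \<open>2\<^bsup>n(I+\<gamma>)\<^esup>\<close> times its typical probability has an empirical
  information density more than \<open>\<gamma>\<close> above its mean \<open>I\<close>; Chebyshev bounds the probability of this.\<close>

lemma atypical_prob_le:
  assumes "0 < n" "0 < \<gamma>"
  shows "expect (iid_pmf n q) (\<lambda>c. expect (dmc K c) (\<lambda>x.
      if pmf (dmc K c) x \<le> 2 powr (n * (I + \<gamma>)) * pmf (iid_pmf n out) x then 0 else 1))
    \<le> info_variance / (n * \<gamma>\<^sup>2)"
proof -
  define h where "h c x = (if pmf (dmc K c) x \<le> 2 powr (n * (I + \<gamma>)) * pmf (iid_pmf n out) x then 0 else 1::real)"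
    for c x
  define g where "g = (\<lambda>(u, v). info_density u v - I)"
  have fQ: "finite_pmf (iid_pmf n q)" using finite_q by simp
  have fdmc: "c \<in> set_pmf (iid_pmf n q) \<Longrightarrow> finite_pmf (dmc K c)" for c
    using finite_K by (intro finite_pmf_dmc) (auto simp: set_iid_pmf)
  have "expect (iid_pmf n q) (\<lambda>c. expect (dmc K c) (h c))
      = expect (bind_pmf (iid_pmf n q) (\<lambda>c. map_pmf (\<lambda>x. (c, x)) (dmc K c))) (\<lambda>(c, x). h c x)"
    using fQ fdmc by (simp add: expect_bind expect_map cong: expect_cong)
  also have "\<dots> = expect (iid_pmf n joint) (\<lambda>ps. h (map fst ps) (map snd ps))"
    using finite_joint unfolding joint_def bind_iid_pmf_dmc_pairs by (simp add: expect_map)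
  also have "\<dots> \<le> expect (iid_pmf n joint) (\<lambda>ps. if n * \<gamma> < sum_list (map g ps) then 1 else 0)"
  proof (rule expect_mono)
    fix ps assume ps: "ps \<in> set_pmf (iid_pmf n joint)"
    note llr = log_likelihood_ratio_dmc[OF ps]
    have "log 2 (2 powr (n * (I + \<gamma>)) * pmf (iid_pmf n out) (map snd ps))
        < log 2 (pmf (dmc K (map fst ps)) (map snd ps))" if "h (map fst ps) (map snd ps) \<noteq> 0"
      using that llr(1,2) by (simp add: h_def split: if_splits)
    then have "h (map fst ps) (map snd ps) \<noteq> 0 \<Longrightarrow> n * (I + \<gamma>) < sum_list (map (\<lambda>(u, v). info_density u v) ps)"
      using llr by (simp add: log_mult)
    moreover have "sum_list (map (\<lambda>(u, v). info_density u v) ps) = sum_list (map g ps) + n * I"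
      using ps by (simp add: g_def case_prod_unfold sum_list_map_diff_const set_iid_pmf)
    ultimately show "h (map fst ps) (map snd ps) \<le> (if n * \<gamma> < sum_list (map g ps) then 1 else 0)"
      by (auto simp: h_def algebra_simps split: if_splits)
  qed
  also have "\<dots> \<le> n * expect joint (\<lambda>z. (g z)\<^sup>2) / (n * \<gamma>)\<^sup>2"
  proof (rule expect_iid_sum_list_large_le[OF finite_joint])
    show "expect joint g = 0"
      using finite_joint unfolding g_def case_prod_unfold
      by (simp add: expect_diff I_eq_expect_info_density[unfolded case_prod_unfold, symmetric])
  qed (use assms in simp)
  also have "\<dots> = info_variance / (n * \<gamma>\<^sup>2)"
    unfolding info_variance_def g_def case_prod_unfold using assms by (simp add: power2_eq_square)
  finally show ?thesis unfolding h_def .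
qed

lemma expect_l1_dist_codebook_le:
  fixes n L :: nat and \<gamma> :: real
  assumes n: "n > 0" and L: "L > 0" and \<gamma>: "\<gamma> > 0"
  shows "expect (iid_pmf L (iid_pmf n q)) (\<lambda>cs. l1_dist (uniform_mix (dmc K) cs) (iid_pmf n out))
     \<le> sqrt (2 powr (n * (I + \<gamma>)) / L) + 2 * info_variance / (n * \<gamma>\<^sup>2)"
proof -
  define c0 where "c0 = 2 powr (n * (I + \<gamma>))"
  have out_n: "bind_pmf (iid_pmf n q) (dmc K) = iid_pmf n out" unfolding out_def by (rule bind_iid_pmf_dmc)
  have fdmc: "c \<in> set_pmf (iid_pmf n q) \<Longrightarrow> finite_pmf (dmc K c)" for c
    using finite_K by (intro finite_pmf_dmc) (auto simp: set_iid_pmf)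
  have "expect (iid_pmf L (iid_pmf n q)) (\<lambda>cs. l1_dist (uniform_mix (dmc K) cs) (iid_pmf n out))
      \<le> (\<Sum>x\<in>set_pmf (iid_pmf n out). sqrt (c0 * pmf (iid_pmf n out) x * pmf (iid_pmf n out) x / L))
       + 2 * expect (iid_pmf n q) (\<lambda>c. expect (dmc K c) (\<lambda>x.
          if pmf (dmc K c) x \<le> c0 * pmf (iid_pmf n out) x then 0 else 1))"
    using expect_l1_dist_uniform_mix_le[of "iid_pmf n q" "dmc K" L "\<lambda>x. c0 * pmf (iid_pmf n out) x"]
    unfolding out_n using finite_q fdmc L by (simp add: c0_def)
  also have "(\<Sum>x\<in>set_pmf (iid_pmf n out). sqrt (c0 * pmf (iid_pmf n out) x * pmf (iid_pmf n out) x / L))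
      = sqrt (c0 / L) * (\<Sum>x\<in>set_pmf (iid_pmf n out). pmf (iid_pmf n out) x)"
  proof -
    have "sqrt (c0 * a * a / L) = sqrt (c0 / L) * a" if "0 \<le> a" for a
    proof -
      have "sqrt (c0 * a * a / L) = sqrt (c0 / L * a\<^sup>2)" by (simp add: power2_eq_square)
      also have "\<dots> = sqrt (c0 / L) * sqrt (a\<^sup>2)" by (rule real_sqrt_mult)
      also have "\<dots> = sqrt (c0 / L) * a" using that by simp
      finally show ?thesis .
    qed
    then show ?thesis by (simp add: sum_distrib_left)
  qed
  also have "(\<Sum>x\<in>set_pmf (iid_pmf n out). pmf (iid_pmf n out) x) = 1"
    using finite_out by (intro sum_pmf_superset) auto
  finally show ?thesis
    using atypical_prob_le[OF n \<gamma>] unfolding c0_def by simp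
qed

lemma soft_covering_lemma:
  assumes IR: "I < R" and e: "0 < \<epsilon>"
  shows "\<exists>N. \<forall>n\<ge>N. \<forall>L::nat. 2 powr (n * R) \<le> L \<longrightarrow>
     expect (iid_pmf L (iid_pmf n q)) (\<lambda>cs. l1_dist (uniform_mix (dmc K) cs) (iid_pmf n out)) \<le> \<epsilon>"
proof -
  define \<gamma> where "\<gamma> = (R - I) / 2"
  have g: "0 < \<gamma>" using IR by (simp add: \<gamma>_def)
  have l1: "((\<lambda>n::nat. 2 powr (-(\<gamma>/2) * real n)) \<longlongrightarrow> 0) sequentially" using g by real_asymp
  have l2: "((\<lambda>n::nat. (2 * info_variance / \<gamma>\<^sup>2) / real n) \<longlongrightarrow> 0) sequentially"
    by (intro tendsto_divide_0[OF tendsto_const] filterlim_at_top_imp_at_infinity filterlim_real_sequentially)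
  have "eventually (\<lambda>n. 2 powr (-(\<gamma>/2) * real n) < \<epsilon>/2) sequentially"
    using order_tendstoD(2)[OF l1, of "\<epsilon>/2"] e by simp
  moreover have "eventually (\<lambda>n. (2 * info_variance / \<gamma>\<^sup>2) / real n < \<epsilon>/2) sequentially"
    using order_tendstoD(2)[OF l2, of "\<epsilon>/2"] e by simp
  moreover have "eventually (\<lambda>n. n \<ge> (1::nat)) sequentially" by (rule eventually_ge_at_top)
  ultimately have "eventually (\<lambda>n. 2 powr (-(\<gamma>/2) * real n) < \<epsilon>/2
      \<and> (2 * info_variance / \<gamma>\<^sup>2) / real n < \<epsilon>/2 \<and> n \<ge> 1) sequentially"
    by eventually_elim auto
  then obtain N where N: "\<And>n. n \<ge> N \<Longrightarrow> 2 powr (-(\<gamma>/2) * real n) < \<epsilon>/2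
      \<and> (2 * info_variance / \<gamma>\<^sup>2) / real n < \<epsilon>/2 \<and> n \<ge> 1"
    unfolding eventually_sequentially by blast
  show ?thesis
  proof (intro exI allI impI)
    fix n L assume nN: "N \<le> n" and LR: "2 powr (n * R) \<le> real L"
    have Lp: "0 < real L" using LR by (rule less_le_trans[rotated]) simp
    have "(I + \<gamma> - R) * n / 2 = -(\<gamma>/2) * n" by (simp add: \<gamma>_def field_simps)
    then have "sqrt (2 powr (n * (I + \<gamma>)) / L) \<le> 2 powr (-(\<gamma>/2) * n)"
      using sqrt_powr_div_le[OF LR, of "I + \<gamma>"] by simp
    then have "sqrt (2 powr (n * (I + \<gamma>)) / L) < \<epsilon>/2" using N[OF nN] by simp
    moreover have "2 * info_variance / (n * \<gamma>\<^sup>2) < \<epsilon>/2" using N[OF nN] by (simp add: field_simps)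
    moreover have "n > 0" using N[OF nN] by simp
    ultimately show "expect (iid_pmf L (iid_pmf n q)) (\<lambda>cs. l1_dist (uniform_mix (dmc K) cs) (iid_pmf n out)) \<le> \<epsilon>"
      using expect_l1_dist_codebook_le[OF _ _ g, of n L] Lp by simp
  qed
qed

end


section \<open>Randomized codes\<close>

lemma idx_set_eq: "idx_set n R = {1..nat \<lceil>2 powr (real n * R)\<rceil>}"
  by (simp add: idx_set_def)

lemma one_le_nat_ceiling_powr: "1 \<le> nat \<lceil>2 powr (real n * R)\<rceil>"
proof -
  have "0 < \<lceil>2 powr (real n * R)\<rceil>" by simp
  then show ?thesis by linarith
qed

lemma powr_le_nat_ceiling_powr: "2 powr (real n * R) \<le> real (nat \<lceil>2 powr (real n * R)\<rceil>)"
proof -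
  have "0 < 2 powr (real n * R)" by simp
  then have "0 \<le> \<lceil>2 powr (real n * R)\<rceil>" using le_of_int_ceiling[of "2 powr (real n * R)"] by linarith
  then show ?thesis using le_of_int_ceiling by simp
qed

lemma powr_add_le_nat_ceiling_powr:
  "2 powr (real n * (R + Rc)) \<le> real (nat \<lceil>2 powr (real n * Rc)\<rceil> * nat \<lceil>2 powr (real n * R)\<rceil>)"
proof -
  have "2 powr (real n * (R + Rc)) = 2 powr (real n * Rc) * 2 powr (real n * R)"
    by (simp add: powr_add[symmetric] algebra_simps)
  also have "\<dots> \<le> real (nat \<lceil>2 powr (real n * Rc)\<rceil>) * real (nat \<lceil>2 powr (real n * R)\<rceil>)"
    by (intro mult_mono[OF powr_le_nat_ceiling_powr powr_le_nat_ceiling_powr] of_nat_0_le_iff powr_ge_zero)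
  finally show ?thesis by simp
qed

lemma idx_set_nonempty: "idx_set n R \<noteq> {}" and finite_idx_set: "finite (idx_set n R)"
  unfolding idx_set_def using one_le_nat_ceiling_powr[of n R] by auto

lemma rho_n_nonneg: "(\<And>x y. 0 \<le> \<rho> x y) \<Longrightarrow> 0 \<le> rho_n \<rho> n xs ys"
  unfolding rho_n_def by (auto intro!: sum_list_nonneg divide_nonneg_nonneg)

lemma rho_n_le:
  assumes "\<And>x y. \<rho> x y \<le> B" "\<And>x y. 0 \<le> \<rho> x y" "n > 0" "length ys = n"
  shows "rho_n \<rho> n xs ys \<le> B"
proof -
  have B: "0 \<le> B" using assms(1)[of undefined undefined] assms(2)[of undefined undefined] by linarith
  have "sum_list (map2 \<rho> xs ys) \<le> sum_list (map (\<lambda>_. B) (zip xs ys))"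
    by (rule sum_list_mono) (auto simp: assms(1) split_beta)
  also have "\<dots> = length (zip xs ys) * B" by (simp add: sum_list_triv)
  also have "\<dots> \<le> n * B" using assms(4) B by (intro mult_right_mono) auto
  finally show ?thesis unfolding rho_n_def using assms(3) by (simp add: field_simps)
qed

lemma finite_pmf_code_law:
  assumes "\<And>k x. finite_pmf (E k x)" "\<And>j k. finite_pmf (F j k)"
  shows "finite_pmf (code_law n Rc (\<mu> :: 'a::finite pmf) E F)"
  unfolding code_law_def
  by (intro finite_pmf_bind assms finite_pmf_iid_finite_type) (simp_all add: idx_set_nonempty finite_idx_set)

lemma code_law_bind_decoder:
  "code_law n Rc \<mu> E (\<lambda>j k. bind_pmf (F j k) W) =
   bind_pmf (code_law n Rc \<mu> E F) (\<lambda>(k, x, j, y0). map_pmf (\<lambda>y. (k, x, j, y)) (W y0))"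
  unfolding code_law_def by (simp add: bind_assoc_pmf bind_return_pmf map_pmf_def)

lemma finite_pmf_decoder:
  assumes "is_code n R Rc E F"
  shows "finite_pmf (F j k :: 'a::finite list pmf)"
proof (rule finite_subset)
  show "set_pmf (F j k) \<subseteq> {ys. set ys \<subseteq> UNIV \<and> length ys = n}" using assms unfolding is_code_def by blast
qed (rule finite_lists_length_eq[OF finite])

lemma is_code_bind_decoder:
  assumes code: "is_code n R Rc E F" and W: "\<And>y. length y = n \<Longrightarrow> set_pmf (W y) \<subseteq> {ys. length ys = n}"
  shows "is_code n R Rc E (\<lambda>j k. bind_pmf (F j k) W)"
  unfolding is_code_def
proof (intro conjI allI impI ballI subsetI)
  fix k x j assume "k \<in> idx_set n Rc" "length x = n" "j \<in> set_pmf (E k x)"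
  then show "j \<in> idx_set n R" using code by (auto simp: is_code_def)
next
  fix j k y assume "y \<in> set_pmf (bind_pmf (F j k) W)"
  then obtain y0 where y0: "y0 \<in> set_pmf (F j k)" and y: "y \<in> set_pmf (W y0)" by auto
  have "length y0 = n" using code y0 unfolding is_code_def by blast
  then show "y \<in> {ys. length ys = n}" using W y by blast
qed

text \<open>The new decoder post-processes the reconstruction with the correction channel from the old output
  law to \<open>\<psi>\<^sup>n\<close>.\<close>

lemma exact_output_code:
  fixes \<mu> \<psi> :: "'a::finite pmf" and \<rho> :: "'a \<Rightarrow> 'a \<Rightarrow> real"
  assumes code: "is_code n R Rc E F0" and fE: "\<And>k x. finite_pmf (E k x)"
    and \<rho>0: "\<And>x y. 0 \<le> \<rho> x y" and \<rho>B: "\<And>x y. \<rho> x y \<le> B" and n: "0 < n"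
  shows "\<exists>F. is_code n R Rc E F \<and>
     map_pmf (\<lambda>(k, x, j, y). y) (code_law n Rc \<mu> E F) = iid_pmf n \<psi> \<and>
     measure_pmf.expectation (code_law n Rc \<mu> E F) (\<lambda>(k, x, j, y). rho_n \<rho> n x y)
       \<le> expect (code_law n Rc \<mu> E F0) (\<lambda>(k, x, j, y). rho_n \<rho> n x y)
         + B * l1_dist (map_pmf (\<lambda>(k, x, j, y). y) (code_law n Rc \<mu> E F0)) (iid_pmf n \<psi>)"
proof -
  let ?L0 = "code_law n Rc \<mu> E F0"
  let ?\<nu> = "map_pmf (\<lambda>(k, x, j, y). y) ?L0" and ?\<pi> = "iid_pmf n \<psi>"
  define W where "W = correction ?\<nu> ?\<pi>"
  define F where "F j k = bind_pmf (F0 j k) W" for j k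
  have fF0: "finite_pmf (F0 j k)" for j k using code by (rule finite_pmf_decoder)
  have fL0: "finite_pmf ?L0" using fE fF0 by (rule finite_pmf_code_law)
  have fin: "finite_pmf ?\<nu>" "finite_pmf ?\<pi>" using fL0 finite_pmf_iid_finite_type by auto
  have fW: "finite_pmf (W b)" for b unfolding W_def using fin by (rule finite_pmf_correction)
  have law: "code_law n Rc \<mu> E F = bind_pmf ?L0 (\<lambda>(k, x, j, y0). map_pmf (\<lambda>y. (k, x, j, y)) (W y0))"
    unfolding F_def by (rule code_law_bind_decoder)
  have B: "0 \<le> B" using \<rho>0[of undefined undefined] \<rho>B[of undefined undefined] by linarith
  have "is_code n R Rc E F"
    unfolding F_def W_def using set_correction[OF fin]
    by (intro is_code_bind_decoder[OF code]) (auto simp: set_iid_pmf)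
  moreover have "map_pmf (\<lambda>(k, x, j, y). y) (code_law n Rc \<mu> E F) = ?\<pi>"
  proof -
    have "map_pmf (\<lambda>(k, x, j, y). y) (code_law n Rc \<mu> E F) = bind_pmf ?\<nu> W"
      unfolding law by (simp add: map_bind_pmf bind_map_pmf pmf.map_comp o_def split_beta map_pmf_def[symmetric])
    then show ?thesis unfolding W_def bind_correction[OF fin] .
  qed
  moreover have "measure_pmf.expectation (code_law n Rc \<mu> E F) (\<lambda>(k, x, j, y). rho_n \<rho> n x y)
      \<le> expect ?L0 (\<lambda>(k, x, j, y). rho_n \<rho> n x y) + B * l1_dist ?\<nu> ?\<pi>"
  proof -
    have "measure_pmf.expectation (code_law n Rc \<mu> E F) (\<lambda>(k, x, j, y). rho_n \<rho> n x y)
        = expect ?L0 (\<lambda>(k, x, j, y0). expect (W y0) (\<lambda>y. rho_n \<rho> n x y))"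
      using fL0 fW unfolding law
      by (subst expect_eq_integral) (auto simp: expect_bind expect_map split_beta intro!: expect_cong)
    also have "\<dots> \<le> expect ?L0 (\<lambda>(k, x, j, y0). rho_n \<rho> n x y0 + B * (1 - keep_prob ?\<nu> ?\<pi> y0))"
    proof (rule expect_mono, clarify)
      fix k x j y0
      show "expect (W y0) (\<lambda>y. rho_n \<rho> n x y) \<le> rho_n \<rho> n x y0 + B * (1 - keep_prob ?\<nu> ?\<pi> y0)"
        unfolding W_def using \<rho>0 \<rho>B n
        by (intro expect_correction_le[OF fin] rho_n_nonneg rho_n_le) (auto simp: set_iid_pmf)
    qed
    also have "\<dots> = expect ?L0 (\<lambda>(k, x, j, y). rho_n \<rho> n x y) + B * expect ?\<nu> (\<lambda>y. 1 - keep_prob ?\<nu> ?\<pi> y)"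
      using fL0 by (simp add: expect_map expect_add expect_cmult case_prod_unfold)
    also have "\<dots> \<le> expect ?L0 (\<lambda>(k, x, j, y). rho_n \<rho> n x y) + B * l1_dist ?\<nu> ?\<pi>"
      using expect_reject_le_l1_dist[OF fin] B by (intro add_left_mono mult_left_mono)
    finally show ?thesis .
  qed
  ultimately show ?thesis by blast
qed


section \<open>Likelihood encoders over a random codebook\<close>

text \<open>A codebook consists of \<open>Mc\<close> rows of \<open>M\<close> codewords in \<open>U\<^sup>n\<close>; the common randomness \<open>k\<close> selects a
  row (rows are numbered from \<open>1\<close>, like \<open>idx_set\<close>).  Given the source sequence \<open>x\<close>, the likelihood
  encoder draws the index \<open>j\<close> of a codeword \<open>c\<close> of that row with probability proportional to
  \<open>KX\<^sup>n(x | c)\<close>, and the decoder passes codeword \<open>j\<close> through \<open>KY\<^sup>n\<close>.  Outside the codebook both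
  return arbitrary values.\<close>

locale likelihood_code =
  fixes q :: "nat pmf" and KX KY :: "nat \<Rightarrow> 'a::finite pmf" and \<rho> :: "'a \<Rightarrow> 'a \<Rightarrow> real" and B :: real
  assumes finite_q: "finite_pmf q" and \<rho>_nonneg: "\<And>x y. 0 \<le> \<rho> x y" and \<rho>_le: "\<And>x y. \<rho> x y \<le> B"
begin

definition "KXY u = pair_pmf (KX u) (KY u)"
definition "law_X = bind_pmf q KX"
definition "law_Y = bind_pmf q KY"
definition "law_XY = bind_pmf q KXY"

definition "index_joint r =
  bind_pmf (pmf_of_set {..<length r}) (\<lambda>i. map_pmf (\<lambda>x. (x, i)) (dmc KX (r ! i)))"

definition "lik_enc cb k x =
  (if k \<in> {1..length cb} \<and> x \<in> set_pmf (map_pmf fst (index_joint (cb ! (k - 1))))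
   then map_pmf Suc (cond_snd (index_joint (cb ! (k - 1))) x) else return_pmf 1)"

definition "dec n cb j k =
  (if k \<in> {1..length cb} \<and> j \<in> {1..length (cb ! (k - 1))}
   then dmc KY (cb ! (k - 1) ! (j - 1)) else return_pmf (replicate n undefined))"

definition "enc_dec n cb k x = bind_pmf (lik_enc cb k x) (\<lambda>j. map_pmf (\<lambda>y. (x, j, y)) (dec n cb j k))"

definition "codebook n M Mc cb \<longleftrightarrow> length cb = Mc \<and>
   (\<forall>r\<in>set cb. length r = M \<and> (\<forall>c\<in>set r. length c = n \<and> set c \<subseteq> set_pmf q))"

definition "codeword_distortion n c = expect (pair_pmf (dmc KX c) (dmc KY c)) (\<lambda>(x, y). rho_n \<rho> n x y)"
definition "l1_X n r = l1_dist (uniform_mix (dmc KX) r) (iid_pmf n law_X)"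
definition "l1_XY n cs = l1_dist (uniform_mix (dmc KXY) cs) (iid_pmf n law_XY)"

text \<open>One \<open>B * l1_X\<close> pays for the encoder seeing the true source instead of the ideal one; the other and
  \<open>B * l1_XY\<close> pay for correcting the output law to \<open>law_Y\<^sup>n\<close>.\<close>

definition "codebook_cost n cb =
  sum_list (map (\<lambda>r. sum_list (map (codeword_distortion n) r) / length r) cb) / length cb
  + 2 * B * (sum_list (map (l1_X n) cb) / length cb) + B * l1_XY n (concat cb)"

lemma B_nonneg: "0 \<le> B"
  using \<rho>_nonneg[of undefined undefined] \<rho>_le[of undefined undefined] by linarith

lemma map_fst_index_joint: "r \<noteq> [] \<Longrightarrow> map_pmf fst (index_joint r) = uniform_mix (dmc KX) r"
  unfolding index_joint_def uniform_mix_def by (simp add: map_bind_pmf pmf.map_comp o_def)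

lemma finite_pmf_index_joint: "r \<noteq> [] \<Longrightarrow> finite_pmf (index_joint r)"
  unfolding index_joint_def by (auto simp: set_pmf_of_lessThan finite_pmf_dmc_finite_type)

lemma map_snd_dmc_KXY: "map_pmf (map snd) (dmc KXY c) = dmc KY c"
  by (simp add: map_pmf_map_dmc KXY_def map_snd_pair_pmf)

text \<open>Fed with the ideal source \<open>uniform_mix (dmc KX) r\<close>, the likelihood encoder followed by the decoder
  produces exactly a uniformly chosen codeword passed through \<open>KX\<^sup>n\<close> and \<open>KY\<^sup>n\<close> independently.\<close>

lemma enc_dec_ideal_source:
  assumes k: "k \<in> {1..length cb}" and r: "cb ! (k - 1) = r" and ne: "r \<noteq> []"
  shows "bind_pmf (map_pmf fst (index_joint r)) (enc_dec n cb k) =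
    bind_pmf (pmf_of_set {..<length r})
      (\<lambda>i. map_pmf (\<lambda>(x, y). (x, Suc i, y)) (pair_pmf (dmc KX (r ! i)) (dmc KY (r ! i))))"
proof -
  have "bind_pmf (map_pmf fst (index_joint r)) (enc_dec n cb k) =
     bind_pmf (map_pmf fst (index_joint r)) (\<lambda>x. bind_pmf (map_pmf (Pair x) (cond_snd (index_joint r) x))
        (\<lambda>(x', i). map_pmf (\<lambda>y. (x', Suc i, y)) (dec n cb (Suc i) k)))"
    by (rule bind_pmf_cong[OF refl]) (use k r in \<open>simp add: enc_dec_def lik_enc_def bind_map_pmf\<close>)
  also have "\<dots> = bind_pmf (index_joint r) (\<lambda>(x, i). map_pmf (\<lambda>y. (x, Suc i, y)) (dec n cb (Suc i) k))"
    by (subst (2) disintegrate_pmf[OF finite_pmf_index_joint[OF ne]]) (simp add: bind_assoc_pmf)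
  also have "\<dots> = bind_pmf (pmf_of_set {..<length r})
      (\<lambda>i. bind_pmf (dmc KX (r ! i)) (\<lambda>x. map_pmf (\<lambda>y. (x, Suc i, y)) (dec n cb (Suc i) k)))"
    unfolding index_joint_def by (simp add: bind_assoc_pmf bind_map_pmf)
  also have "\<dots> = bind_pmf (pmf_of_set {..<length r})
      (\<lambda>i. map_pmf (\<lambda>(x, y). (x, Suc i, y)) (pair_pmf (dmc KX (r ! i)) (dmc KY (r ! i))))"
  proof (rule bind_pmf_cong[OF refl])
    fix i assume "i \<in> set_pmf (pmf_of_set {..<length r})"
    then have "dec n cb (Suc i) k = dmc KY (r ! i)" using k r ne by (simp add: dec_def set_pmf_of_lessThan)
    then show "bind_pmf (dmc KX (r ! i)) (\<lambda>x. map_pmf (\<lambda>y. (x, Suc i, y)) (dec n cb (Suc i) k)) =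
        map_pmf (\<lambda>(x, y). (x, Suc i, y)) (pair_pmf (dmc KX (r ! i)) (dmc KY (r ! i)))"
      by (simp add: pair_pmf_def map_bind_pmf map_pmf_def bind_assoc_pmf bind_return_pmf)
  qed
  finally show ?thesis .
qed

lemma set_lik_enc:
  assumes cb: "codebook n M Mc cb" and M: "M > 0"
  shows "set_pmf (lik_enc cb k x) \<subseteq> {1..M}"
proof (cases "k \<in> {1..length cb} \<and> x \<in> set_pmf (map_pmf fst (index_joint (cb ! (k - 1))))")
  case True
  let ?r = "cb ! (k - 1)"
  have "length ?r = M" using True cb by (auto simp: codebook_def)
  then have "set_pmf (cond_snd (index_joint ?r) x) \<subseteq> {..<M}"
    using True M by (auto simp: set_cond_snd index_joint_def set_pmf_of_lessThan)
  then show ?thesis using True by (auto simp: lik_enc_def)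
next
  case False then show ?thesis using M by (auto simp: lik_enc_def)
qed

lemma finite_pmf_lik_enc: "codebook n M Mc cb \<Longrightarrow> M > 0 \<Longrightarrow> finite_pmf (lik_enc cb k x)"
  by (rule finite_subset[OF set_lik_enc]) auto

lemma length_dec: "codebook n M Mc cb \<Longrightarrow> y \<in> set_pmf (dec n cb j k) \<Longrightarrow> length y = n"
proof (cases "k \<in> {1..length cb} \<and> j \<in> {1..length (cb ! (k - 1))}")
  case True
  assume cb: "codebook n M Mc cb" and y: "y \<in> set_pmf (dec n cb j k)"
  have "cb ! (k - 1) \<in> set cb" "cb ! (k - 1) ! (j - 1) \<in> set (cb ! (k - 1))" using True by auto
  then have "length (cb ! (k - 1) ! (j - 1)) = n" using cb by (auto simp: codebook_def)
  then show ?thesis using y True by (auto simp: dec_def dest!: length_dmc)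
qed (auto simp: dec_def)

lemma finite_pmf_dec: "finite_pmf (dec n cb j k)"
  unfolding dec_def by (auto simp: finite_pmf_dmc_finite_type)

lemma finite_pmf_enc_dec: "codebook n M Mc cb \<Longrightarrow> M > 0 \<Longrightarrow> finite_pmf (enc_dec n cb k x)"
  unfolding enc_dec_def using finite_pmf_lik_enc finite_pmf_dec by (auto intro!: finite_UN_I)

lemma is_code_lik_enc:
  assumes "codebook n M Mc cb" "M > 0" "idx_set n R = {1..M}"
  shows "is_code n R Rc (lik_enc cb) (dec n cb)"
  unfolding is_code_def using set_lik_enc[OF assms(1,2)] length_dec[OF assms(1)] assms(3) by auto

lemma expect_uniform_row:
  "cb \<noteq> [] \<Longrightarrow> expect (pmf_of_set {1..length cb}) (\<lambda>k. g (cb ! (k - 1))) = sum_list (map g cb) / length cb"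
proof -
  assume "cb \<noteq> []"
  then have "{1..length cb} \<noteq> {}" by (cases cb) auto
  then show ?thesis by (simp add: expect_pmf_of_set sum_list_map_eq_sum_atLeastAtMost)
qed

context
  fixes n M Mc :: nat and cb :: "nat list list list"
  assumes n: "0 < n" and M: "0 < M" and cb: "codebook n M Mc cb"
begin

lemma length_row: "r \<in> set cb \<Longrightarrow> length r = M"
  using cb by (simp add: codebook_def)

lemma row_nonempty: "r \<in> set cb \<Longrightarrow> r \<noteq> []"
  using length_row M by fastforce

lemma expect_row_distortion_le:
  assumes k: "k \<in> {1..length cb}"
  shows "expect (bind_pmf (iid_pmf n law_X) (enc_dec n cb k)) (\<lambda>(x, j, y). rho_n \<rho> n x y)
    \<le> sum_list (map (codeword_distortion n) (cb ! (k - 1))) / length (cb ! (k - 1)) + B * l1_X n (cb ! (k - 1))"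
proof -
  let ?r = "cb ! (k - 1)" and ?d = "\<lambda>(x, j, y). rho_n \<rho> n x y"
  have r: "?r \<in> set cb" using k by auto
  have ne: "?r \<noteq> []" using row_nonempty[OF r] .
  have fG: "finite_pmf (enc_dec n cb k x)" for x using cb M by (rule finite_pmf_enc_dec)
  have fJ: "finite_pmf (map_pmf fst (index_joint ?r))" using finite_pmf_index_joint[OF ne] by simp
  have fX: "finite_pmf (iid_pmf n law_X)" by (rule finite_pmf_iid_finite_type)
  have bounded: "\<bar>expect (enc_dec n cb k x) ?d\<bar> \<le> B" for x
  proof -
    have d: "0 \<le> ?d z \<and> ?d z \<le> B" if "z \<in> set_pmf (enc_dec n cb k x)" for z
      using that length_dec[OF cb] \<rho>_nonneg \<rho>_le n
      by (auto simp: enc_dec_def intro!: rho_n_nonneg rho_n_le)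
    have "0 \<le> expect (enc_dec n cb k x) ?d" using d by (intro expect_nonneg) blast
    moreover have "expect (enc_dec n cb k x) ?d \<le> B" using d fG by (intro expect_le_const) blast+
    ultimately show ?thesis by simp
  qed
  have "expect (bind_pmf (iid_pmf n law_X) (enc_dec n cb k)) ?d
      - expect (bind_pmf (map_pmf fst (index_joint ?r)) (enc_dec n cb k)) ?d
      \<le> B * l1_dist (iid_pmf n law_X) (map_pmf fst (index_joint ?r))"
    using fX fJ fG bounded by (simp add: expect_bind expect_diff_le_l1_dist)
  also have "l1_dist (iid_pmf n law_X) (map_pmf fst (index_joint ?r)) = l1_X n ?r"
    using ne by (simp add: l1_X_def map_fst_index_joint l1_dist_commute)
  also have "expect (bind_pmf (map_pmf fst (index_joint ?r)) (enc_dec n cb k)) ?d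
      = expect (pmf_of_set {..<length ?r}) (\<lambda>i. codeword_distortion n (?r ! i))"
    unfolding enc_dec_ideal_source[OF k refl ne] using ne
    by (subst expect_bind) (auto simp: set_pmf_of_lessThan finite_pmf_dmc_finite_type expect_map
        codeword_distortion_def case_prod_unfold intro!: expect_cong)
  also have "\<dots> = sum_list (map (codeword_distortion n) ?r) / length ?r"
    using ne by (simp add: expect_pmf_of_set sum_list_map_eq_sum_lessThan lessThan_empty_iff)
  finally show ?thesis by simp
qed

lemma l1_row_output_le:
  assumes k: "k \<in> {1..length cb}"
  shows "l1_dist (map_pmf (\<lambda>(x, j, y). y) (bind_pmf (iid_pmf n law_X) (enc_dec n cb k)))
    (uniform_mix (dmc KY) (cb ! (k - 1))) \<le> l1_X n (cb ! (k - 1))"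
proof -
  let ?r = "cb ! (k - 1)"
  have ne: "?r \<noteq> []" using row_nonempty k by auto
  have fG: "finite_pmf (enc_dec n cb k x)" for x using cb M by (rule finite_pmf_enc_dec)
  have fJ: "finite_pmf (map_pmf fst (index_joint ?r))" using finite_pmf_index_joint[OF ne] by simp
  have ideal: "uniform_mix (dmc KY) ?r = map_pmf (\<lambda>(x, j, y). y) (bind_pmf (map_pmf fst (index_joint ?r)) (enc_dec n cb k))"
    unfolding enc_dec_ideal_source[OF k refl ne] uniform_mix_def
    by (simp add: map_bind_pmf pmf.map_comp o_def case_prod_unfold) (simp add: snd_def[symmetric] map_snd_pair_pmf)
  have "l1_dist (map_pmf (\<lambda>(x, j, y). y) (bind_pmf (iid_pmf n law_X) (enc_dec n cb k))) (uniform_mix (dmc KY) ?r)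
      \<le> l1_dist (bind_pmf (iid_pmf n law_X) (enc_dec n cb k)) (bind_pmf (map_pmf fst (index_joint ?r)) (enc_dec n cb k))"
    unfolding ideal
    by (intro l1_dist_map_le finite_pmf_bind fJ fG finite_pmf_iid_finite_type)
  also have "\<dots> \<le> l1_dist (iid_pmf n law_X) (map_pmf fst (index_joint ?r))"
    using fJ fG finite_pmf_iid_finite_type by (intro l1_dist_bind_le) auto
  also have "\<dots> = l1_X n ?r"
    using ne by (simp add: l1_X_def map_fst_index_joint l1_dist_commute)
  finally show ?thesis .
qed

context
  fixes Rc :: real
  assumes Mc: "0 < Mc" and idx_Rc: "idx_set n Rc = {1..Mc}"
begin

lemma code_law_lik_enc:
  "code_law n Rc law_X (lik_enc cb) (dec n cb) = bind_pmf (pmf_of_set {1..length cb})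
     (\<lambda>k. map_pmf (\<lambda>(x, j, y). (k, x, j, y)) (bind_pmf (iid_pmf n law_X) (enc_dec n cb k)))"
  using cb idx_Rc unfolding code_law_def enc_dec_def codebook_def
  by (simp add: map_bind_pmf pmf.map_comp o_def map_pmf_def[symmetric])

lemma cb_nonempty: "cb \<noteq> []"
  using cb Mc by (auto simp: codebook_def)

lemma expect_lik_enc_distortion_le:
  "expect (code_law n Rc law_X (lik_enc cb) (dec n cb)) (\<lambda>(k, x, j, y). rho_n \<rho> n x y)
   \<le> sum_list (map (\<lambda>r. sum_list (map (codeword_distortion n) r) / length r + B * l1_X n r) cb) / length cb"
proof -
  have fG: "finite_pmf (bind_pmf (iid_pmf n law_X) (enc_dec n cb k))" for k
    using finite_pmf_enc_dec[OF cb M] finite_pmf_iid_finite_type by simp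
  have "expect (code_law n Rc law_X (lik_enc cb) (dec n cb)) (\<lambda>(k, x, j, y). rho_n \<rho> n x y)
      = expect (pmf_of_set {1..length cb}) (\<lambda>k. expect (bind_pmf (iid_pmf n law_X) (enc_dec n cb k))
          (\<lambda>(x, j, y). rho_n \<rho> n x y))"
    unfolding code_law_lik_enc using fG cb_nonempty
    by (subst expect_bind) (auto simp: Suc_le_eq expect_map case_prod_unfold intro!: expect_cong)
  also have "\<dots> \<le> expect (pmf_of_set {1..length cb})
      (\<lambda>k. (\<lambda>r. sum_list (map (codeword_distortion n) r) / length r + B * l1_X n r) (cb ! (k - 1)))"
    using cb_nonempty by (intro expect_mono expect_row_distortion_le) (auto simp: Suc_le_eq)
  also have "\<dots> = sum_list (map (\<lambda>r. sum_list (map (codeword_distortion n) r) / length r + B * l1_X n r) cb) / length cb"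
    using cb_nonempty by (rule expect_uniform_row)
  finally show ?thesis .
qed

lemma l1_lik_enc_output_le:
  "l1_dist (map_pmf (\<lambda>(k, x, j, y). y) (code_law n Rc law_X (lik_enc cb) (dec n cb))) (iid_pmf n law_Y)
   \<le> sum_list (map (l1_X n) cb) / length cb + l1_XY n (concat cb)"
proof -
  let ?row = "\<lambda>k. map_pmf (\<lambda>(x, j, y). y) (bind_pmf (iid_pmf n law_X) (enc_dec n cb k))"
  let ?U = "pmf_of_set {1..length cb}"
  have fU: "finite_pmf ?U" and sU: "set_pmf ?U = {1..length cb}" using cb_nonempty by (auto simp: Suc_le_eq)
  have frow: "finite_pmf (?row k)" for k
  proof -
    have "finite_pmf (bind_pmf (iid_pmf n law_X) (enc_dec n cb k))"
      by (rule finite_pmf_bind[OF finite_pmf_iid_finite_type]) (rule finite_pmf_enc_dec[OF cb M])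
    then show ?thesis by simp
  qed
  have fmix: "finite_pmf (uniform_mix (dmc KXY) (concat cb))"
    using cb_nonempty row_nonempty by (intro finite_pmf_uniform_mix finite_pmf_dmc_finite_type) (cases cb, auto)
  have out: "map_pmf (\<lambda>(k, x, j, y). y) (code_law n Rc law_X (lik_enc cb) (dec n cb)) = bind_pmf ?U ?row"
    unfolding code_law_lik_enc by (simp add: map_bind_pmf pmf.map_comp o_def case_prod_unfold)
  have ideal: "bind_pmf ?U (\<lambda>k. uniform_mix (dmc KY) (cb ! (k - 1))) = map_pmf (map snd) (uniform_mix (dmc KXY) (concat cb))"
    using uniform_mix_concat[OF cb_nonempty length_row M, of "dmc KY"]
    by (simp add: uniform_mix_def map_bind_pmf map_snd_dmc_KXY)
  have target: "iid_pmf n law_Y = map_pmf (map snd) (iid_pmf n law_XY)"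
    by (simp add: map_pmf_map_iid_pmf law_XY_def law_Y_def map_bind_pmf KXY_def map_snd_pair_pmf)
  have "l1_dist (bind_pmf ?U ?row) (bind_pmf ?U (\<lambda>k. uniform_mix (dmc KY) (cb ! (k - 1))))
      \<le> expect ?U (\<lambda>k. l1_dist (?row k) (uniform_mix (dmc KY) (cb ! (k - 1))))"
    using fU frow sU row_nonempty
    by (intro l1_dist_bind_right_le) (auto intro!: finite_pmf_uniform_mix finite_pmf_dmc_finite_type)
  also have "\<dots> \<le> expect ?U (\<lambda>k. l1_X n (cb ! (k - 1)))"
    using sU by (intro expect_mono l1_row_output_le) auto
  also have "\<dots> = sum_list (map (l1_X n) cb) / length cb" using cb_nonempty by (rule expect_uniform_row)
  finally have "l1_dist (bind_pmf ?U ?row) (map_pmf (map snd) (uniform_mix (dmc KXY) (concat cb)))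
      \<le> sum_list (map (l1_X n) cb) / length cb" unfolding ideal .
  moreover have "l1_dist (map_pmf (map snd) (uniform_mix (dmc KXY) (concat cb))) (iid_pmf n law_Y) \<le> l1_XY n (concat cb)"
    unfolding target l1_XY_def using fmix finite_pmf_iid_finite_type by (rule l1_dist_map_le)
  ultimately show ?thesis unfolding out
    using l1_dist_triangle[of "bind_pmf ?U ?row" "map_pmf (map snd) (uniform_mix (dmc KXY) (concat cb))" "iid_pmf n law_Y"]
      fU frow fmix finite_pmf_iid_finite_type by simp
qed

lemma code_from_codebook:
  assumes idx_R: "idx_set n R = {1..M}"
  shows "\<exists>E F. is_code n R Rc E F \<and>
     measure_pmf.expectation (code_law n Rc law_X E F) (\<lambda>(k, x, j, y). rho_n \<rho> n x y) \<le> codebook_cost n cb \<and>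
     map_pmf (\<lambda>(k, x, j, y). y) (code_law n Rc law_X E F) = iid_pmf n law_Y"
proof -
  obtain F where code: "is_code n R Rc (lik_enc cb) F"
    and out: "map_pmf (\<lambda>(k, x, j, y). y) (code_law n Rc law_X (lik_enc cb) F) = iid_pmf n law_Y"
    and dist: "measure_pmf.expectation (code_law n Rc law_X (lik_enc cb) F) (\<lambda>(k, x, j, y). rho_n \<rho> n x y)
      \<le> expect (code_law n Rc law_X (lik_enc cb) (dec n cb)) (\<lambda>(k, x, j, y). rho_n \<rho> n x y)
        + B * l1_dist (map_pmf (\<lambda>(k, x, j, y). y) (code_law n Rc law_X (lik_enc cb) (dec n cb))) (iid_pmf n law_Y)"
    using exact_output_code[where \<mu> = law_X and \<psi> = law_Y and \<rho> = \<rho> and B = B,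
        OF is_code_lik_enc[OF cb M idx_R] finite_pmf_lik_enc[OF cb M] \<rho>_nonneg \<rho>_le n]
    by blast
  have "measure_pmf.expectation (code_law n Rc law_X (lik_enc cb) F) (\<lambda>(k, x, j, y). rho_n \<rho> n x y)
      \<le> sum_list (map (\<lambda>r. sum_list (map (codeword_distortion n) r) / length r + B * l1_X n r) cb) / length cb
        + B * (sum_list (map (l1_X n) cb) / length cb + l1_XY n (concat cb))"
    using dist expect_lik_enc_distortion_le l1_lik_enc_output_le B_nonneg
    by (meson add_mono mult_left_mono order_trans)
  also have "\<dots> = codebook_cost n cb"
    unfolding codebook_cost_def
    by (simp add: sum_list_addf sum_list_const_mult add_divide_distrib algebra_simps)
  finally show ?thesis using code out by blast
qed

end

end

lemma expect_codeword_distortion: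
  assumes n: "0 < n"
  shows "expect (iid_pmf n q) (codeword_distortion n) = expect law_XY (\<lambda>(x, y). \<rho> x y)"
proof -
  have fQ: "finite_pmf (iid_pmf n q)" using finite_q by simp
  have "expect (iid_pmf n q) (codeword_distortion n) =
      expect (iid_pmf n q) (\<lambda>c. expect (dmc KXY c) (\<lambda>ps. rho_n \<rho> n (map fst ps) (map snd ps)))"
  proof (rule expect_cong)
    fix c
    have "pair_pmf (dmc KX c) (dmc KY c) = map_pmf (\<lambda>ps. (map fst ps, map snd ps)) (dmc KXY c)"
      unfolding KXY_def[abs_def] by (rule dmc_pair_pmf[symmetric])
    then show "codeword_distortion n c = expect (dmc KXY c) (\<lambda>ps. rho_n \<rho> n (map fst ps) (map snd ps))"
      unfolding codeword_distortion_def by (simp add: expect_map finite_pmf_dmc_finite_type)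
  qed
  also have "\<dots> = expect (bind_pmf (iid_pmf n q) (dmc KXY)) (\<lambda>ps. rho_n \<rho> n (map fst ps) (map snd ps))"
    using fQ by (subst expect_bind) (auto simp: finite_pmf_dmc_finite_type)
  also have "bind_pmf (iid_pmf n q) (dmc KXY) = iid_pmf n law_XY"
    unfolding law_XY_def by (rule bind_iid_pmf_dmc)
  also have "expect (iid_pmf n law_XY) (\<lambda>ps. rho_n \<rho> n (map fst ps) (map snd ps)) =
      expect (iid_pmf n law_XY) (\<lambda>ps. sum_list (map (\<lambda>(x, y). \<rho> x y) ps) / n)"
    by (rule expect_cong) (simp add: rho_n_def zip_map_fst_snd)
  also have "\<dots> = expect law_XY (\<lambda>(x, y). \<rho> x y)"
    using n by (simp add: expect_divc expect_iid_sum_list finite_pmf_finite_type)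
  finally show ?thesis .
qed

text \<open>The two \<open>L\<^sub>1\<close> terms are the soft-covering quantities at rate \<open>R\<close> (one row) and at rate \<open>R + Rc\<close>
  (the whole codebook).\<close>

lemma expect_codebook_cost:
  assumes n: "n > 0" and M: "M > 0" and Mc: "Mc > 0"
  shows "expect (iid_pmf Mc (iid_pmf M (iid_pmf n q))) (codebook_cost n) =
    expect law_XY (\<lambda>(x, y). \<rho> x y) + 2 * B * expect (iid_pmf M (iid_pmf n q)) (l1_X n)
    + B * expect (iid_pmf (Mc * M) (iid_pmf n q)) (l1_XY n)"
proof -
  define Q where "Q = iid_pmf n q"
  define RW where "RW = iid_pmf M Q"
  define CB where "CB = iid_pmf Mc RW"
  have fQ: "finite_pmf Q" using finite_q by (simp add: Q_def)
  have fRW: "finite_pmf RW" using fQ by (simp add: RW_def)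
  have fCB: "finite_pmf CB" using fRW by (simp add: CB_def)
  have row: "expect RW (\<lambda>r. sum_list (map (codeword_distortion n) r) / length r) = expect law_XY (\<lambda>(x, y). \<rho> x y)"
  proof -
    have "expect RW (\<lambda>r. sum_list (map (codeword_distortion n) r) / length r)
        = expect RW (\<lambda>r. sum_list (map (codeword_distortion n) r) / M)"
      by (rule expect_cong) (simp add: RW_def set_iid_pmf)
    also have "\<dots> = expect Q (codeword_distortion n)" using M fQ by (simp add: expect_divc RW_def expect_iid_sum_list)
    finally show ?thesis using expect_codeword_distortion[OF n] by (simp add: Q_def)
  qed
  have "expect CB (codebook_cost n) = expect CB (\<lambda>cb. sum_list (map (\<lambda>r. sum_list (map (codeword_distortion n) r) / length r) cb) / Mc
      + 2 * B * (sum_list (map (l1_X n) cb) / Mc) + B * l1_XY n (concat cb))"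
    by (rule expect_cong) (simp add: codebook_cost_def CB_def set_iid_pmf)
  also have "\<dots> = expect RW (\<lambda>r. sum_list (map (codeword_distortion n) r) / length r) + 2 * B * expect RW (l1_X n)
      + B * expect CB (\<lambda>cb. l1_XY n (concat cb))"
    using Mc fRW by (simp add: expect_add expect_cmult expect_divc CB_def expect_iid_sum_list)
  also have "expect CB (\<lambda>cb. l1_XY n (concat cb)) = expect (iid_pmf (Mc * M) Q) (l1_XY n)"
    using fCB by (simp add: expect_map[symmetric] CB_def RW_def map_pmf_concat_iid_pmf)
  finally show ?thesis using row by (simp add: CB_def RW_def Q_def)
qed

lemma codebook_of_iid: "cb \<in> set_pmf (iid_pmf Mc (iid_pmf M (iid_pmf n q))) \<Longrightarrow> codebook n M Mc cb"
  unfolding codebook_def set_iid_pmf by (auto; blast)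

lemma exists_good_codebook:
  assumes IX: "soft_covering.I q KX < R" and IXY: "soft_covering.I q KXY < R + Rc"
    and e: "0 < \<epsilon>"
  shows "\<exists>N. \<forall>n\<ge>N. \<exists>cb. codebook n (nat \<lceil>2 powr (n * R)\<rceil>) (nat \<lceil>2 powr (n * Rc)\<rceil>) cb \<and>
    codebook_cost n cb \<le> expect law_XY (\<lambda>(x, y). \<rho> x y) + \<epsilon>"
proof -
  interpret SX: soft_covering q KX by standard (rule finite_q, rule finite_pmf_finite_type)
  interpret SXY: soft_covering q KXY by standard (rule finite_q, rule finite_pmf_finite_type)
  define e' where "e' = \<epsilon> / (3 * B + 1)"
  have e': "0 < e'" using e B_nonneg by (simp add: e'_def)
  have e'B: "3 * B * e' \<le> \<epsilon>"
  proof -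
    have "3 * B * e' = \<epsilon> * (3 * B / (3 * B + 1))" using B_nonneg by (simp add: e'_def)
    also have "\<dots> \<le> \<epsilon> * 1" using e B_nonneg by (intro mult_left_mono) auto
    finally show ?thesis by simp
  qed
  obtain N1 where N1: "\<And>n L. n \<ge> N1 \<Longrightarrow> 2 powr (n * R) \<le> real L \<Longrightarrow>
      expect (iid_pmf L (iid_pmf n q)) (\<lambda>cs. l1_dist (uniform_mix (dmc KX) cs) (iid_pmf n SX.out)) \<le> e'"
    using SX.soft_covering_lemma[OF IX e'] by blast
  obtain N2 where N2: "\<And>n L. n \<ge> N2 \<Longrightarrow> 2 powr (n * (R + Rc)) \<le> real L \<Longrightarrow>
      expect (iid_pmf L (iid_pmf n q)) (\<lambda>cs. l1_dist (uniform_mix (dmc KXY) cs) (iid_pmf n SXY.out)) \<le> e'"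
    using SXY.soft_covering_lemma[OF IXY e'] by blast
  have outs: "SX.out = law_X" "SXY.out = law_XY" by (simp_all add: SX.out_def SXY.out_def law_X_def law_XY_def)
  show ?thesis
  proof (rule exI[of _ "max (max N1 N2) 1"], intro allI impI)
    fix n assume nN: "max (max N1 N2) 1 \<le> n"
    define M where "M = nat \<lceil>2 powr (real n * R)\<rceil>"
    define Mc where "Mc = nat \<lceil>2 powr (real n * Rc)\<rceil>"
    have n: "n > 0" using nN by simp
    have M: "M > 0" and Mc: "Mc > 0"
      using one_le_nat_ceiling_powr[of n R] one_le_nat_ceiling_powr[of n Rc] by (auto simp: M_def Mc_def)
    have MR: "2 powr (n * R) \<le> real M" unfolding M_def by (rule powr_le_nat_ceiling_powr)
    have MMc: "2 powr (n * (R + Rc)) \<le> real (Mc * M)"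
      unfolding M_def Mc_def by (rule powr_add_le_nat_ceiling_powr)
    let ?CB = "iid_pmf Mc (iid_pmf M (iid_pmf n q))"
    have "expect ?CB (codebook_cost n)
        \<le> expect law_XY (\<lambda>(x, y). \<rho> x y) + 2 * B * e' + B * e'"
      unfolding expect_codebook_cost[OF n M Mc] l1_X_def l1_XY_def
      using N1[of n M] N2[of n "Mc * M"] nN MR MMc B_nonneg outs
      by (intro add_mono mult_left_mono) auto
    also have "\<dots> \<le> expect law_XY (\<lambda>(x, y). \<rho> x y) + \<epsilon>" using e'B by simp
    finally have avg: "expect ?CB (codebook_cost n) \<le> expect law_XY (\<lambda>(x, y). \<rho> x y) + \<epsilon>" .
    obtain cb where "cb \<in> set_pmf ?CB" "codebook_cost n cb \<le> expect ?CB (codebook_cost n)"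
      using exists_le_expect[of ?CB] finite_q by auto
    then show "\<exists>cb. codebook n (nat \<lceil>2 powr (n * R)\<rceil>) (nat \<lceil>2 powr (n * Rc)\<rceil>) cb \<and>
        codebook_cost n cb \<le> expect law_XY (\<lambda>(x, y). \<rho> x y) + \<epsilon>"
      using avg codebook_of_iid M_def Mc_def by fastforce
  qed
qed

theorem achievable_of_rates:
  assumes IX: "soft_covering.I q KX < R" and IXY: "soft_covering.I q KXY < R + Rc"
    and D: "expect law_XY (\<lambda>(x, y). \<rho> x y) \<le> D"
  shows "achievable \<rho> law_X law_Y D R Rc"
  unfolding achievable_def
proof (intro allI impI)
  fix \<epsilon> :: real assume e: "\<epsilon> > 0"
  obtain N where N: "\<And>n. n \<ge> N \<Longrightarrow> \<exists>cb. codebook n (nat \<lceil>2 powr (n * R)\<rceil>) (nat \<lceil>2 powr (n * Rc)\<rceil>) cb \<and>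
      codebook_cost n cb \<le> expect law_XY (\<lambda>(x, y). \<rho> x y) + \<epsilon>"
    using exists_good_codebook[OF IX IXY e] by blast
  show "\<exists>N. \<forall>n\<ge>N. \<exists>E F. is_code n R Rc E F \<and>
      measure_pmf.expectation (code_law n Rc law_X E F) (\<lambda>(k, x, j, y). rho_n \<rho> n x y) \<le> D + \<epsilon> \<and>
      map_pmf (\<lambda>(k, x, j, y). y) (code_law n Rc law_X E F) = iid_pmf n law_Y"
  proof (rule exI[of _ "max N 1"], intro allI impI)
    fix n assume n: "max N 1 \<le> n"
    then obtain cb where cb: "codebook n (nat \<lceil>2 powr (n * R)\<rceil>) (nat \<lceil>2 powr (n * Rc)\<rceil>) cb"
      and cost: "codebook_cost n cb \<le> expect law_XY (\<lambda>(x, y). \<rho> x y) + \<epsilon>" using N by fastforce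
    have n0: "0 < n" using n by simp
    have sizes: "0 < nat \<lceil>2 powr (real n * R)\<rceil>" "0 < nat \<lceil>2 powr (real n * Rc)\<rceil>"
      using one_le_nat_ceiling_powr[of n R] one_le_nat_ceiling_powr[of n Rc] by simp_all
    obtain E F where "is_code n R Rc E F"
      "measure_pmf.expectation (code_law n Rc law_X E F) (\<lambda>(k, x, j, y). rho_n \<rho> n x y) \<le> codebook_cost n cb"
      "map_pmf (\<lambda>(k, x, j, y). y) (code_law n Rc law_X E F) = iid_pmf n law_Y"
      using code_from_codebook[OF n0 sizes(1) cb sizes(2) idx_set_eq idx_set_eq] by blast
    then show "\<exists>E F. is_code n R Rc E F \<and>
        measure_pmf.expectation (code_law n Rc law_X E F) (\<lambda>(k, x, j, y). rho_n \<rho> n x y) \<le> D + \<epsilon> \<and>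
        map_pmf (\<lambda>(k, x, j, y). y) (code_law n Rc law_X E F) = iid_pmf n law_Y"
      using cost D by fastforce
  qed
qed

end


section \<open>Achievability of \<open>S(D)\<close>\<close>

lemma pmf_map_eq_of_vimage_eq: "f -` {a} = g -` {b} \<Longrightarrow> pmf (map_pmf f P) a = pmf (map_pmf g P) b"
  by (simp add: pmf_map)

lemma map_pmf_fst_pair_pmf: "map_pmf (\<lambda>z. f (fst z)) (pair_pmf A B) = map_pmf f A"
proof -
  have "map_pmf (\<lambda>z. f (fst z)) (pair_pmf A B) = map_pmf f (map_pmf fst (pair_pmf A B))"
    by (simp add: pmf.map_comp o_def)
  then show ?thesis by (simp add: map_fst_pair_pmf)
qed

lemma pmf_map_cond_snd:
  assumes "a \<in> set_pmf (map_pmf fst W)"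
  shows "pmf (map_pmf f (cond_snd W a)) b = pmf (map_pmf (\<lambda>(a, c). (a, f c)) W) (a, b) / pmf (map_pmf fst W) a"
proof -
  have fst: "map_pmf fst (map_pmf (\<lambda>(a, c). (a, f c)) W) = map_pmf fst W"
    by (simp add: pmf.map_comp o_def case_prod_unfold)
  show ?thesis
    unfolding cond_snd_map[OF assms, symmetric] using assms by (subst pmf_cond_snd) (simp_all add: fst)
qed

lemma markov_XUY_channels:
  fixes P :: "('a \<times> 'b \<times> 'u) pmf"
  assumes fin: "finite_pmf P" and markov: "markov_XUY P"
  obtains KX KY where "map_pmf (\<lambda>(x, y, u). ((x, y), u)) P =
    bind_pmf (map_pmf (\<lambda>(x, y, u). u) P) (\<lambda>u. map_pmf (\<lambda>v. (v, u)) (pair_pmf (KX u) (KY u)))"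
proof -
  define q where "q = map_pmf (\<lambda>(x, y, u). u) P"
  define W where "W = map_pmf (\<lambda>(x, y, u). (u, (x, y))) P"
  define KXY where "KXY u = cond_snd W u" for u
  have fst_W: "map_pmf fst W = q" by (simp add: W_def q_def pmf.map_comp o_def case_prod_unfold)
  have swap: "pmf (map_pmf (\<lambda>(x, y, u). (u, x)) P) (u, x) = pmf (map_pmf (\<lambda>(x, y, u). (x, u)) P) (x, u)"
    "pmf (map_pmf (\<lambda>(x, y, u). (u, y)) P) (u, y) = pmf (map_pmf (\<lambda>(x, y, u). (y, u)) P) (y, u)" for x y u
    by (intro pmf_map_eq_of_vimage_eq; force)+
  have pW: "pmf W (u, (x, y)) = pmf P (x, y, u)" for x y u
    using pmf_map_inj'[of "\<lambda>(x, y, u). (u, (x, y))" P "(x, y, u)"] by (simp add: W_def inj_def)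
  have factor: "KXY u = pair_pmf (map_pmf fst (KXY u)) (map_pmf snd (KXY u))" if u: "u \<in> set_pmf q" for u
  proof (rule pmf_eqI, clarify)
    fix x y
    have qu: "0 < pmf q u" using u by (simp add: pmf_positive)
    have "map_pmf (\<lambda>(a, c). (a, fst c)) W = map_pmf (\<lambda>(x, y, u). (u, x)) P"
      "map_pmf (\<lambda>(a, c). (a, snd c)) W = map_pmf (\<lambda>(x, y, u). (u, y)) P"
      by (simp_all add: W_def pmf.map_comp o_def case_prod_unfold)
    then have "pmf (pair_pmf (map_pmf fst (KXY u)) (map_pmf snd (KXY u))) (x, y) =
        pmf (map_pmf (\<lambda>(x, y, u). (x, u)) P) (x, u) * pmf (map_pmf (\<lambda>(x, y, u). (y, u)) P) (y, u) / (pmf q u * pmf q u)"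
      using u unfolding KXY_def pmf_pair by (simp add: pmf_map_cond_snd fst_W swap)
    also have "\<dots> = pmf P (x, y, u) * pmf q u / (pmf q u * pmf q u)"
      using markov unfolding markov_XUY_def q_def by simp
    also have "\<dots> = pmf P (x, y, u) / pmf q u" using qu by simp
    also have "\<dots> = pmf (KXY u) (x, y)"
      unfolding KXY_def pmf_cond_snd[of u W, unfolded fst_W, OF u] pW ..
    finally show "pmf (KXY u) (x, y) = pmf (pair_pmf (map_pmf fst (KXY u)) (map_pmf snd (KXY u))) (x, y)" ..
  qed
  have "map_pmf (\<lambda>(x, y, u). ((x, y), u)) P = map_pmf prod.swap W"
    by (simp add: W_def pmf.map_comp o_def case_prod_unfold prod.swap_def)
  also have "\<dots> = bind_pmf q (\<lambda>u. map_pmf (\<lambda>v. (v, u)) (KXY u))"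
  proof -
    have "finite_pmf W" using fin by (simp add: W_def)
    from disintegrate_pmf[OF this] have dis: "W = bind_pmf q (\<lambda>u. map_pmf (Pair u) (KXY u))"
      unfolding fst_W KXY_def .
    show ?thesis by (subst dis) (simp add: map_bind_pmf pmf.map_comp o_def)
  qed
  also have "\<dots> = bind_pmf q (\<lambda>u. map_pmf (\<lambda>v. (v, u)) (pair_pmf (map_pmf fst (KXY u)) (map_pmf snd (KXY u))))"
    using factor by (intro bind_pmf_cong) auto
  finally show ?thesis unfolding q_def by (rule that)
qed

lemma finite_pmf_of_H_set:
  assumes "P \<in> H_set \<rho> \<mu> \<psi> D"
  shows "finite_pmf P"
proof (rule finite_subset)
  show "set_pmf P \<subseteq> UNIV \<times> UNIV \<times> {..<CARD('a) * CARD('a) + 1}" using assms by (auto simp: H_set_def)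
qed simp

lemma achievable_of_H_set:
  fixes P :: "('a::finite \<times> 'a \<times> nat) pmf" and \<rho> :: "'a \<Rightarrow> 'a \<Rightarrow> real"
  assumes P: "P \<in> H_set \<rho> \<mu> \<psi> D" and \<rho>: "\<And>x y. 0 \<le> \<rho> x y"
    and RX: "mi P (\<lambda>(x, y, u). x) (\<lambda>(x, y, u). u) < R"
    and RXY: "mi P (\<lambda>(x, y, u). (x, y)) (\<lambda>(x, y, u). u) < R + Rc"
  shows "achievable \<rho> \<mu> \<psi> D R Rc"
proof -
  from P have \<mu>: "map_pmf (\<lambda>(x, y, u). x) P = \<mu>" and \<psi>: "map_pmf (\<lambda>(x, y, u). y) P = \<psi>"
    and dist: "measure_pmf.expectation P (\<lambda>(x, y, u). \<rho> x y) \<le> D" and markov: "markov_XUY P"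
    unfolding H_set_def by auto
  have fin: "finite_pmf P" using P by (rule finite_pmf_of_H_set)
  obtain KX KY where joint: "map_pmf (\<lambda>(x, y, u). ((x, y), u)) P =
      bind_pmf (map_pmf (\<lambda>(x, y, u). u) P) (\<lambda>u. map_pmf (\<lambda>v. (v, u)) (pair_pmf (KX u) (KY u)))"
    using markov_XUY_channels[OF fin markov] by blast
  define q where "q = map_pmf (\<lambda>(x, y, u). u) P"
  define B where "B = (\<Sum>z\<in>UNIV. case_prod \<rho> z)"
  have \<rho>_le: "\<rho> x y \<le> B" for x y
  proof -
    have "case_prod \<rho> (x, y) \<le> B" unfolding B_def by (rule member_le_sum) (auto simp: \<rho>)
    then show ?thesis by simp
  qed
  have fq: "finite_pmf q" using fin by (simp add: q_def)
  interpret likelihood_code q KX KY \<rho> B by standard (rule fq, rule \<rho>, rule \<rho>_le)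
  interpret SX: soft_covering q KX by standard (rule fq, rule finite_pmf_finite_type)
  interpret SXY: soft_covering q KXY by standard (rule fq, rule finite_pmf_finite_type)
  have joint': "map_pmf (\<lambda>(x, y, u). ((x, y), u)) P = bind_pmf q (\<lambda>u. map_pmf (\<lambda>v. (v, u)) (KXY u))"
    unfolding joint q_def KXY_def ..
  have law_XY: "law_XY = map_pmf (\<lambda>(x, y, u). (x, y)) P"
  proof -
    have "map_pmf (\<lambda>(x, y, u). (x, y)) P = map_pmf fst (map_pmf (\<lambda>(x, y, u). ((x, y), u)) P)"
      by (simp add: pmf.map_comp o_def case_prod_unfold)
    then show ?thesis unfolding joint' by (simp add: law_XY_def map_bind_pmf pmf.map_comp o_def)
  qed
  have "law_X = map_pmf fst law_XY" "law_Y = map_pmf snd law_XY"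
    by (simp_all add: law_X_def law_Y_def law_XY_def map_bind_pmf KXY_def map_fst_pair_pmf map_snd_pair_pmf)
  then have "law_X = \<mu>" "law_Y = \<psi>"
    unfolding law_XY \<mu>[symmetric] \<psi>[symmetric] by (simp_all add: pmf.map_comp o_def case_prod_unfold)
  moreover have "SX.I < R"
  proof -
    have "map_pmf (\<lambda>c. ((\<lambda>(x, y, u). x) c, (\<lambda>(x, y, u). u) c)) P
        = map_pmf (\<lambda>(v, u). (fst v, u)) (map_pmf (\<lambda>(x, y, u). ((x, y), u)) P)"
      by (simp add: pmf.map_comp o_def case_prod_unfold)
    also have "\<dots> = bind_pmf q (\<lambda>u. map_pmf (\<lambda>v. (v, u)) (KX u))"
      unfolding joint' by (simp add: map_bind_pmf pmf.map_comp o_def KXY_def)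
        (rule bind_pmf_cong[OF refl], rule map_pmf_fst_pair_pmf)
    finally show ?thesis using RX unfolding SX.I_eq_mi mi_eq_mi_joint[OF fin] by simp
  qed
  moreover have "SXY.I < R + Rc"
    using RXY unfolding SXY.I_eq_mi mi_eq_mi_joint[OF fin] joint'[symmetric]
    by (simp add: pmf.map_comp o_def case_prod_unfold)
  moreover have "expect law_XY (\<lambda>(x, y). \<rho> x y) \<le> D"
    using dist fin by (simp add: law_XY expect_map expect_eq_integral case_prod_unfold)
  ultimately show ?thesis using achievable_of_rates by metis
qed

lemma mem_closure_of_shifts:
  fixes A :: "(real \<times> real) set"
  assumes "\<And>e. 0 < e \<Longrightarrow> (R + e, Rc + e) \<in> A"
  shows "(R, Rc) \<in> closure A"
  unfolding closure_approachable
proof (intro allI impI)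
  fix e :: real assume e: "0 < e"
  have "dist (R + e / 2, Rc + e / 2) (R, Rc) = sqrt ((e / 2)\<^sup>2 + (e / 2)\<^sup>2)"
    using e by (simp add: dist_Pair_Pair dist_real_def)
  also have "\<dots> < sqrt (e\<^sup>2)" using e by (intro real_sqrt_less_mono) (simp add: power2_eq_square)
  finally show "\<exists>y\<in>A. dist y (R, Rc) < e" using assms[of "e / 2"] e by auto
qed

theorem corollary1:
  fixes d :: "'a::finite \<Rightarrow> 'a \<Rightarrow> real" and p D :: real and \<mu> \<psi> :: "'a pmf"
  assumes "\<forall>x y. d x y = 0 \<longleftrightarrow> x = y"
    and "\<forall>x y. d x y = d y x"
    and "\<forall>x y z. d x z \<le> d x y + d y z"
    and "p > 0"
    and "D \<ge> 0"
  shows "S_set (\<lambda>x y. d x y powr p) \<mu> \<psi> D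
           \<subseteq> closure (rate_region (\<lambda>x y. d x y powr p) \<mu> \<psi> D)"
proof (clarify)
  fix R Rc assume "(R, Rc) \<in> S_set (\<lambda>x y. d x y powr p) \<mu> \<psi> D"
  then obtain P where P: "P \<in> H_set (\<lambda>x y. d x y powr p) \<mu> \<psi> D"
    and RX: "mi P (\<lambda>(x, y, u). x) (\<lambda>(x, y, u). u) \<le> R"
    and RXY: "mi P (\<lambda>(x, y, u). (x, y)) (\<lambda>(x, y, u). u) \<le> R + Rc"
    unfolding S_set_def by auto
  show "(R, Rc) \<in> closure (rate_region (\<lambda>x y. d x y powr p) \<mu> \<psi> D)"
  proof (rule mem_closure_of_shifts)
    fix e :: real assume "0 < e"
    then show "(R + e, Rc + e) \<in> rate_region (\<lambda>x y. d x y powr p) \<mu> \<psi> D"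
      unfolding rate_region_def using RX RXY by (auto intro!: achievable_of_H_set[OF P])
  qed
qed

end
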